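(* Let $A$ be a commutative $C^*$-algebra and $a,h\in A$ positive elements of norm one with $\|a-h\|<\delta$ for some $0<\delta\le 1$. Then there are $h'\in C^*(h)_+$ and $g\in C^*(h,a)_+$ with $\|h-h'\|<\delta$ and $\|g\|\le 1$ such that $ga=h'$.
   Context: $C^*(S)$ denotes the $C^*$-subalgebra generated by $S$, and the subscript $+$ denotes its positive elements. *)

theory Defs
  imports "HOL-Analysis.Analysis"
begin

class comm_cstar_algebra = real_normed_algebra + banach + comm_ring +
  fixes scaleC :: "complex \<Rightarrow> 'a \<Rightarrow> 'a"
    and star :: "'a \<Rightarrow> 'a"
  assumes scaleC_of_real: "scaleC (complex_of_real r) x = scaleR r x"
    and scaleC_add_right: "scaleC c (x + y) = scaleC c x + scaleC c y"
    and scaleC_add_left: "scaleC (c + d) x = scaleC c x + scaleC d x"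
    and scaleC_scaleC: "scaleC c (scaleC d x) = scaleC (c * d) x"
    and scaleC_one: "scaleC 1 x = x"
    and scaleC_mult_left: "scaleC c x * y = scaleC c (x * y)"
    and norm_scaleC: "norm (scaleC c x) = cmod c * norm x"
    and star_star: "star (star x) = x"
    and star_add: "star (x + y) = star x + star y"
    and star_mult: "star (x * y) = star y * star x"
    and star_scaleC: "star (scaleC c x) = scaleC (cnj c) (star x)"
    and cstar_identity: "norm (star x * x) = (norm x)\<^sup>2"

definition positive :: "'a::comm_cstar_algebra \<Rightarrow> bool" where
  "positive x \<longleftrightarrow> (\<exists>b. x = star b * b)"

definition cstar_subalgebra :: "'a::comm_cstar_algebra set \<Rightarrow> bool" where
  "cstar_subalgebra B \<longleftrightarrow>
     0 \<in> B \<and> (\<forall>x\<in>B. \<forall>y\<in>B. x + y \<in> B \<and> x * y \<in> B) \<and>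
     (\<forall>c. \<forall>x\<in>B. scaleC c x \<in> B) \<and> (\<forall>x\<in>B. star x \<in> B) \<and> closed B"

definition cstar_gen :: "'a::comm_cstar_algebra set \<Rightarrow> 'a set" where
  "cstar_gen S = \<Inter>{B. cstar_subalgebra B \<and> S \<subseteq> B}"

end

theory Submission
  imports Defs
begin

text \<open>Self-adjoint strict contractions are real parts of unitaries in the unitization. For a real
  polynomial \<open>p\<close> without constant term, evaluated at commuting self-adjoint strict contractions
  \<open>w\<close>, the powers \<open>p(w)^N\<close> are therefore trigonometric polynomials in commuting unitaries;
  discrete Fourier averaging over the torus bounds them by a polynomial in \<open>N\<close> times
  \<open>(sup |p|)^N\<close>, and the C*-identity yields \<open>norm (p(w)) \<le> sup |p|\<close> over the cube, without any
  Gelfand theory. Via Stone-Weierstrass this gives a continuous functional calculus for commuting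
  pairs whose joint spectrum is controlled in this sense.

  Writing \<open>h\<close> and \<open>a\<close> as sums of squares of self-adjoint contractions, the joint spectrum of
  \<open>(h, a)\<close> lies in \<open>[0, 8]\<^sup>2\<close>, and since \<open>norm (a - h) < \<kappa>\<close> also in the strip
  \<open>{(s, s + \<xi>). \<bar>\<xi>\<bar> \<le> \<kappa>}\<close>. With \<open>\<kappa> < r = \<kappa> + c < \<delta>\<close>, put \<open>h' = f(h)\<close> for \<open>f s = max 0 (s - r)\<close>
  and \<open>g = G(h, a)\<close> for \<open>G (s, t) = min 1 (f s / max t c)\<close>. Then \<open>0 \<le> G \<le> 1\<close> and
  \<open>\<bar>s - f s\<bar> \<le> r\<close> for \<open>s \<ge> 0\<close>, while \<open>G (s, t) \<cdot> t = f s\<close> on the strip, which gives \<open>g a = h'\<close>.\<close>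

context comm_cstar_algebra
begin

lemma scaleC_zero_right [simp]: "scaleC c 0 = 0"
proof -
  have "scaleC c 0 = scaleC c 0 + scaleC c 0" using scaleC_add_right[of c 0 0] by simp
  then show ?thesis by simp
qed

lemma scaleC_zero_left [simp]: "scaleC 0 x = 0"
proof -
  have "scaleC 0 x = scaleC 0 x + scaleC 0 x" using scaleC_add_left[of 0 0 x] by simp
  then show ?thesis by simp
qed

lemma scaleC_minus_right: "scaleC c (- x) = - scaleC c x"
proof -
  have "scaleC c (- x) + scaleC c x = 0" by (simp flip: scaleC_add_right)
  then show ?thesis by (simp add: eq_neg_iff_add_eq_0)
qed

lemma scaleC_minus_left: "scaleC (- c) x = - scaleC c x"
proof -
  have "scaleC (- c) x + scaleC c x = 0" by (simp flip: scaleC_add_left)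
  then show ?thesis by (simp add: eq_neg_iff_add_eq_0)
qed

lemma scaleC_diff_right: "scaleC c (x - y) = scaleC c x - scaleC c y"
  using scaleC_add_right[of c x "-y"] scaleC_minus_right[of c y] by simp

lemma scaleC_mult_right: "x * scaleC c y = scaleC c (x * y)"
  by (simp add: mult.commute[of x] scaleC_mult_left)

lemma star_zero [simp]: "star 0 = 0"
proof -
  have "star 0 = star 0 + star 0" using star_add[of 0 0] by simp
  then show ?thesis by simp
qed

lemma star_minus: "star (- x) = - star x"
proof -
  have "star (- x) + star x = 0" by (simp flip: star_add)
  then show ?thesis by (simp add: eq_neg_iff_add_eq_0)
qed

lemma star_diff: "star (x - y) = star x - star y"
  using star_add[of x "-y"] star_minus[of y] by simp

lemma star_scaleR: "star (r *\<^sub>R x) = r *\<^sub>R star x"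
  using star_scaleC[of "complex_of_real r" x] by (simp add: scaleC_of_real)

lemma star_mult_comm: "star (x * y) = star x * star y"
  by (simp add: star_mult mult.commute)

lemma norm_star_le: "norm (star x) \<le> norm x"
proof -
  have "(norm (star x))\<^sup>2 = norm (star (star x) * star x)" by (rule cstar_identity[symmetric])
  also have "\<dots> = norm (x * star x)" by (simp add: star_star)
  also have "\<dots> \<le> norm x * norm (star x)" by (rule norm_mult_ineq)
  finally have "norm (star x) * norm (star x) \<le> norm x * norm (star x)" by (simp add: power2_eq_square)
  then show ?thesis
    by (cases "norm (star x) = 0") (auto simp: mult_le_cancel_right)
qed

lemma norm_star [simp]: "norm (star x) = norm x"
  using norm_star_le[of x] norm_star_le[of "star x"] by (simp add: star_star)

end

lemma bounded_linear_star: "bounded_linear (star :: 'a::comm_cstar_algebra \<Rightarrow> 'a)"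
  by (rule bounded_linear_intro[where K=1]) (auto simp: star_add star_scaleR)

text \<open>\<open>UA x c\<close> stands for \<open>x + c \<cdot> 1\<close>; \<open>act X\<close> is multiplication by \<open>X\<close> on the ideal \<open>A\<close>.\<close>

datatype 'a unitization = UA (uA: 'a) (uC: complex)

instantiation unitization :: (comm_cstar_algebra) comm_ring_1
begin
definition "0 = UA 0 0"
definition "1 = UA 0 1"
definition "X + Y = UA (uA X + uA Y) (uC X + uC Y)"
definition "- X = UA (- uA X) (- uC X)"
definition "X - Y = UA (uA X - uA Y) (uC X - uC Y)"
definition "X * Y = UA (uA X * uA Y + scaleC (uC X) (uA Y) + scaleC (uC Y) (uA X)) (uC X * uC Y)"
instance
proof
  fix a b c :: "'a unitization"
  show "a * b * c = a * (b * c)"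
  proof (cases a; cases b; cases c)
    fix x l y m z n assume [simp]: "a = UA x l" "b = UA y m" "c = UA z n"
    have "uA (a * b * c) = x*y*z + scaleC l (y*z) + scaleC m (x*z) + scaleC (l*m) z + scaleC n (x*y) + scaleC (n*l) y + scaleC (n*m) x"
      by (simp add: times_unitization_def scaleC_add_right scaleC_mult_left scaleC_scaleC distrib_right)
    moreover have "uA (a * (b * c)) = x*y*z + scaleC l (y*z) + scaleC m (x*z) + scaleC (l*m) z + scaleC n (x*y) + scaleC (n*l) y + scaleC (n*m) x"
      by (simp add: times_unitization_def scaleC_add_right scaleC_mult_right scaleC_scaleC distrib_left mult.assoc mult.commute[of m n] mult.commute[of l n] mult.commute[of l m] add_ac)
    ultimately show ?thesis by (simp add: times_unitization_def mult.assoc)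
  qed
  show "a * b = b * a" by (simp add: times_unitization_def mult.commute add_ac)
  show "1 * a = a" by (simp add: times_unitization_def one_unitization_def scaleC_one)
  show "a + b + c = a + (b + c)" by (simp add: plus_unitization_def algebra_simps)
  show "a + b = b + a" by (simp add: plus_unitization_def algebra_simps)
  show "0 + a = a" by (simp add: plus_unitization_def zero_unitization_def)
  show "- a + a = 0" by (simp add: plus_unitization_def zero_unitization_def uminus_unitization_def)
  show "a - b = a + - b" by (simp add: plus_unitization_def minus_unitization_def uminus_unitization_def)
  show "(a + b) * c = a * c + b * c"
    by (simp add: times_unitization_def plus_unitization_def distrib_right scaleC_add_right scaleC_add_left add_ac)
  show "(0::'a unitization) \<noteq> 1" by (simp add: zero_unitization_def one_unitization_def)
qed
end

lemma uA_simps [simp]: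
  "uA 0 = 0" "uC 0 = 0" "uA 1 = 0" "uC 1 = 1"
  "uA (X + Y) = uA X + uA Y" "uC (X + Y) = uC X + uC Y"
  "uA (- X) = - uA X" "uC (- X) = - uC X"
  "uA (X - Y) = uA X - uA Y" "uC (X - Y) = uC X - uC Y"
  "uA (X * Y) = uA X * uA Y + scaleC (uC X) (uA Y) + scaleC (uC Y) (uA X)"
  "uC (X * Y) = uC X * uC Y"
  for X Y :: "'a::comm_cstar_algebra unitization"
  by (simp_all add: zero_unitization_def one_unitization_def plus_unitization_def uminus_unitization_def minus_unitization_def times_unitization_def)

lemma unitization_eqI: "uA X = uA Y \<Longrightarrow> uC X = uC Y \<Longrightarrow> X = Y"
  by (cases X; cases Y) auto

definition emb :: "'a::comm_cstar_algebra \<Rightarrow> 'a unitization" where "emb x = UA x 0"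
definition scal :: "complex \<Rightarrow> 'a::comm_cstar_algebra unitization" where "scal c = UA 0 c"
definition ustar :: "'a::comm_cstar_algebra unitization \<Rightarrow> 'a unitization" where "ustar X = UA (star (uA X)) (cnj (uC X))"
definition act :: "'a::comm_cstar_algebra unitization \<Rightarrow> 'a \<Rightarrow> 'a" where "act X z = uA (X * emb z)"

lemma emb_simps [simp]: "uA (emb x) = x" "uC (emb x) = 0" "uA (scal c) = 0" "uC (scal c) = c"
  "uA (ustar X) = star (uA X)" "uC (ustar X) = cnj (uC X)"
  by (simp_all add: emb_def scal_def ustar_def)

lemma emb_add: "emb (x + y) = emb x + emb y" by (rule unitization_eqI) auto
lemma emb_mult: "emb (x * y) = emb x * emb y" by (rule unitization_eqI) auto
lemma scal_add: "scal (c + d) = scal c + scal d" by (rule unitization_eqI) auto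
lemma scal_mult: "scal (c * d) = scal c * scal d" by (rule unitization_eqI) auto
lemma scal_one [simp]: "scal 1 = 1" by (rule unitization_eqI) auto
lemma scal_zero [simp]: "scal 0 = 0" by (rule unitization_eqI) auto

lemma scal_sum: "scal (sum f S) = sum (\<lambda>i. scal (f i)) S"
  by (induction S rule: infinite_finite_induct) (auto simp: scal_add)
lemma scal_emb: "scal c * emb x = emb (scaleC c x)" by (rule unitization_eqI) auto

lemma ustar_add: "ustar (X + Y) = ustar X + ustar Y" by (rule unitization_eqI) (auto simp: star_add)
lemma ustar_mult: "ustar (X * Y) = ustar X * ustar Y"
  by (rule unitization_eqI) (auto simp: star_add star_mult_comm star_scaleC)
lemma ustar_one [simp]: "ustar 1 = 1" by (rule unitization_eqI) auto

lemma act_zero [simp]: "act 0 z = 0" by (simp add: act_def)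

lemma ustar_scal: "ustar (scal c) = scal (cnj c)" by (rule unitization_eqI) auto
lemma ustar_emb: "ustar (emb x) = emb (star x)" by (rule unitization_eqI) auto
lemma ustar_ustar [simp]: "ustar (ustar X) = X" by (rule unitization_eqI) (auto simp: star_star)

lemma ustar_power: "ustar (X ^ n) = (ustar X) ^ n"
  by (induction n) (auto simp: ustar_mult)
lemma ustar_prod: "ustar (prod f S) = prod (\<lambda>i. ustar (f i)) S"
  by (induction S rule: infinite_finite_induct) (auto simp: ustar_mult)

lemma act_emb: "emb (act X z) = X * emb z"
  unfolding act_def by (rule unitization_eqI) auto

lemma act_add: "act (X + Y) z = act X z + act Y z"
  unfolding act_def by (simp add: distrib_right)
lemma act_sum: "act (sum f S) z = sum (\<lambda>i. act (f i) z) S"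
  by (induction S rule: infinite_finite_induct) (auto simp: act_add)
lemma act_scal: "act (scal c * X) z = scaleC c (act X z)"
  unfolding act_def by (simp add: mult.assoc)

lemma act_unitary:
  assumes "ustar W * W = 1"
  shows "norm (act W z) = norm z"
proof -
  let ?y = "act W z"
  have "emb (star ?y * ?y) = ustar (emb ?y) * emb ?y" by (simp add: emb_mult ustar_emb)
  also have "\<dots> = ustar W * W * (ustar (emb z) * emb z)"
    by (simp add: act_emb ustar_mult algebra_simps)
  also have "\<dots> = emb (star z * z)" using assms by (simp add: emb_mult ustar_emb)
  finally have "star ?y * ?y = star z * z" by (metis emb_simps(1))
  then have "(norm ?y)\<^sup>2 = (norm z)\<^sup>2" by (metis cstar_identity)
  then show ?thesis by simp
qed

text \<open>Since \<open>A\<close> need not have a unit, powers are shifted: \<open>npow x n = x ^ Suc n\<close>.\<close>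

fun npow :: "'a::comm_cstar_algebra \<Rightarrow> nat \<Rightarrow> 'a" where
  "npow x 0 = x"
| "npow x (Suc n) = x * npow x n"

lemma emb_npow: "emb (npow x n) = (emb x) ^ Suc n"
  by (induction n) (auto simp: emb_mult)

lemma norm_npow: "norm (npow x n) \<le> norm x ^ Suc n"
proof (induction n)
  case (Suc n)
  have "norm (x * npow x n) \<le> norm x * norm (npow x n)" by (rule norm_mult_ineq)
  also have "\<dots> \<le> norm x * norm x ^ Suc n" using Suc by (simp add: mult_left_mono)
  finally show ?case by simp
qed simp

lemma star_npow: "star (npow x n) = npow (star x) n"
  by (induction n) (auto simp: star_mult_comm)

section \<open>Unitary dilation of self-adjoint contractions\<close>

definition binom_half :: "nat \<Rightarrow> real" where "binom_half n = (1/2::real) gchoose n"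
lemma binom_half_0 [simp]: "binom_half 0 = 1" by (simp add: binom_half_def)
lemma binom_half_1 [simp]: "binom_half (Suc 0) = 1/2" by (simp add: binom_half_def)

lemma binom_half_Suc: "binom_half (Suc k) = (1/2 - real k) / real (Suc k) * binom_half k"
proof -
  have "(1/2::real) * ((1/2) gchoose k) = of_nat k * ((1/2) gchoose k) + of_nat (Suc k) * ((1/2) gchoose (Suc k))"
    by (rule gbinomial_mult_1)
  then show ?thesis unfolding binom_half_def by (simp add: field_simps del: of_nat_Suc)
qed

lemma abs_binom_half_le: "\<bar>binom_half n\<bar> \<le> 1"
proof (induction n)
  case (Suc k)
  have "\<bar>(1/2 - real k) / real (Suc k)\<bar> \<le> 1" by (simp add: abs_le_iff field_simps)
  then have "\<bar>(1/2 - real k) / real (Suc k) * binom_half k\<bar> \<le> 1 * 1"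
    unfolding abs_mult using Suc by (intro mult_mono) auto
  then show ?case by (simp add: binom_half_Suc)
qed simp

lemma binom_half_convolution:
  "2 * binom_half (Suc (Suc j)) + (\<Sum>i\<le>j. binom_half (Suc i) * binom_half (Suc j - i)) = 0"
proof -
  let ?f = "\<lambda>k. binom_half k * binom_half (Suc (Suc j) - k)"
  have V: "sum ?f {0..Suc (Suc j)} = (1::real) gchoose (Suc (Suc j))"
    using gbinomial_Vandermonde[of "1/2::real" "1/2" "Suc (Suc j)"] by (simp add: binom_half_def)
  have "(1::real) gchoose (Suc (Suc j)) = of_nat (1 choose (Suc (Suc j)))"
    by (metis binomial_gbinomial of_nat_1)
  then have V0: "sum ?f {0..Suc (Suc j)} = 0" using V by simp
  have "sum ?f {0..Suc (Suc j)} = sum ?f {0..Suc j} + ?f (Suc (Suc j))"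
    by (simp add: sum.atLeast0_atMost_Suc)
  also have "sum ?f {0..Suc j} = ?f 0 + sum ?f {Suc 0..Suc j}"
    by (simp add: sum.atLeast_Suc_atMost)
  also have "sum ?f {Suc 0..Suc j} = (\<Sum>i\<le>j. binom_half (Suc i) * binom_half (Suc j - i))"
    by (subst sum.shift_bounds_cl_Suc_ivl) (simp add: atMost_atLeast0)
  finally show ?thesis using V0 by simp
qed

lemma npow_mult_npow: "npow x i * npow x j = npow x (Suc (i + j))"
proof -
  have "emb (npow x i * npow x j) = emb (npow x (Suc (i + j)))"
    by (simp only: emb_mult emb_npow power_add[symmetric] add_Suc_right add_Suc)
  then show ?thesis by (metis emb_simps(1))
qed

text \<open>The binomial series of \<open>sqrt (1 + X) - 1\<close>.\<close>

definition sqrt1p_series :: "'a::comm_cstar_algebra \<Rightarrow> 'a" where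
  "sqrt1p_series X = (\<Sum>k. binom_half (Suc k) *\<^sub>R npow X k)"

lemma summable_norm_sqrt1p_series:
  assumes "norm X < 1"
  shows "summable (\<lambda>k. norm (binom_half (Suc k) *\<^sub>R npow X k))"
proof (rule summable_comparison_test[where g = "\<lambda>k. norm X ^ Suc k"])
  have "\<bar>binom_half (Suc k)\<bar> * norm (npow X k) \<le> 1 * norm X ^ Suc k" for k
    using abs_binom_half_le norm_npow by (intro mult_mono) auto
  then show "\<exists>N. \<forall>n\<ge>N. norm (norm (binom_half (Suc n) *\<^sub>R npow X n)) \<le> norm X ^ Suc n" by simp
  show "summable (\<lambda>k. norm X ^ Suc k)" using assms by (simp add: summable_geometric_iff)
qed

lemma sqrt1p_series_square:
  assumes "norm X < 1"
  shows "2 *\<^sub>R sqrt1p_series X + sqrt1p_series X * sqrt1p_series X = X"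
proof -
  define a where "a k = binom_half (Suc k) *\<^sub>R npow X k" for k
  have sum_a: "summable (\<lambda>k. norm (a k))" unfolding a_def by (rule summable_norm_sqrt1p_series[OF assms])
  define c where "c k = (if k = 0 then 0 else (\<Sum>i\<le>k - 1. a i * a (k - 1 - i)))" for k
  have "c sums (suminf a * suminf a)"
    using Cauchy_product_sums[OF sum_a sum_a] sums_Suc_iff[of c "suminf a * suminf a"] by (simp add: c_def)
  then have "(\<lambda>k. 2 *\<^sub>R a k + c k) sums (2 *\<^sub>R suminf a + suminf a * suminf a)"
    using summable_norm_cancel[OF sum_a] by (intro sums_add sums_scaleR_right summable_sums)
  moreover have "2 *\<^sub>R a k + c k = (if k = 0 then X else 0)" for k
  proof (cases k)
    case (Suc j)
    have "c k = (\<Sum>i\<le>j. a i * a (j - i))" by (simp add: c_def Suc)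
    also have "\<dots> = (\<Sum>i\<le>j. binom_half (Suc i) * binom_half (Suc j - i)) *\<^sub>R npow X (Suc j)"
      unfolding scaleR_sum_left by (intro sum.cong refl) (simp add: a_def npow_mult_npow Suc_diff_le)
    finally have "2 *\<^sub>R a k + c k
        = (2 * binom_half (Suc (Suc j)) + (\<Sum>i\<le>j. binom_half (Suc i) * binom_half (Suc j - i))) *\<^sub>R npow X (Suc j)"
      by (simp add: Suc a_def scaleR_add_left)
    then show ?thesis using Suc by (simp add: binom_half_convolution)
  qed (simp add: a_def c_def)
  moreover have "(\<lambda>k. if k = 0 then X else 0) sums X" using sums_single[of 0 "\<lambda>_. X"] by simp
  ultimately show ?thesis by (simp add: sums_unique2 sqrt1p_series_def a_def[abs_def])
qed

lemma sqrt1p_series_selfadjoint: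
  assumes "norm X < 1" "star X = X"
  shows "star (sqrt1p_series X) = sqrt1p_series X"
proof -
  have "summable (\<lambda>k. binom_half (Suc k) *\<^sub>R npow X k)"
    by (rule summable_norm_cancel[OF summable_norm_sqrt1p_series[OF assms(1)]])
  from bounded_linear.suminf[OF bounded_linear_star this] show ?thesis
    by (simp add: sqrt1p_series_def star_scaleR star_npow assms(2))
qed

text \<open>A self-adjoint strict contraction \<open>w\<close> is the real part of the unitary
  \<open>w + \<i> sqrt (1 - w\<^sup>2)\<close> in the unitization.\<close>

definition unitary_lift :: "'a::comm_cstar_algebra \<Rightarrow> 'a unitization" where
  "unitary_lift w = UA (w + scaleC \<i> (sqrt1p_series (- (w * w)))) \<i>"

lemma unitary_lift:
  fixes w :: "'a::comm_cstar_algebra"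
  assumes "norm w < 1" "star w = w"
  shows "ustar (unitary_lift w) * unitary_lift w = 1"
    and "scal (1/2) * (unitary_lift w + ustar (unitary_lift w)) = emb w"
proof -
  let ?v = "sqrt1p_series (- (w * w))"
  have "norm (- (w * w)) < 1"
    using norm_mult_ineq[of w w] mult_strict_mono[OF assms(1) assms(1)] by simp
  then have sv: "star ?v = ?v" and id: "2 *\<^sub>R ?v + ?v * ?v = - (w * w)"
    using assms(2) by (simp_all add: sqrt1p_series_selfadjoint sqrt1p_series_square star_minus star_mult_comm)
  have ii: "scaleC \<i> (scaleC \<i> x) = - x" for x :: 'a
    using scaleC_minus_left[of 1 x] by (simp add: scaleC_scaleC scaleC_one)
  have ii2: "scaleC (- \<i>) (scaleC \<i> x) = x" for x :: 'a
    by (simp add: scaleC_scaleC scaleC_one)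
  have two: "2 *\<^sub>R x = x + x" for x :: 'a by (simp add: scaleR_2)
  have sstar: "star (scaleC \<i> ?v) = scaleC (- \<i>) ?v" by (simp add: star_scaleC sv)
  have "uA (ustar (unitary_lift w) * unitary_lift w) = w * w + ?v * ?v + (?v + ?v)"
    by (simp add: scaleC_one ii ii2 unitary_lift_def assms(2) sstar star_add algebra_simps scaleC_add_right scaleC_diff_right scaleC_mult_left
        scaleC_mult_right scaleC_minus_left scaleC_minus_right scaleC_scaleC)
  also have "\<dots> = 0" using id by (simp add: two algebra_simps)
  finally show "ustar (unitary_lift w) * unitary_lift w = 1"
    by (intro unitization_eqI) (simp_all add: unitary_lift_def)
  have "scaleC (1/2) (2 *\<^sub>R w) = scaleC (1/2) (scaleC 2 w)" using scaleC_of_real[of 2 w] by simp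
  also have "\<dots> = w" by (simp add: scaleC_scaleC scaleC_one)
  finally have half: "scaleC (1/2) (2 *\<^sub>R w) = w" .
  show "scal (1/2) * (unitary_lift w + ustar (unitary_lift w)) = emb w"
    by (rule unitization_eqI) (use half in \<open>simp_all add: unitary_lift_def sstar assms(2) star_add scaleC_add_right scaleC_minus_left
        flip: scaleR_2\<close>)
qed

section \<open>Trigonometric polynomials in commuting unitaries\<close>

definition upow :: "'a::comm_cstar_algebra unitization \<Rightarrow> int \<Rightarrow> 'a unitization" where
  "upow W n = (if 0 \<le> n then W ^ nat n else (ustar W) ^ nat (- n))"
lemma upow_0 [simp]: "upow W 0 = 1" by (simp add: upow_def)

lemma upow_1 [simp]: "upow W 1 = W" by (simp add: upow_def)
lemma upow_minus_1 [simp]: "upow W (-1) = ustar W" by (simp add: upow_def)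

lemma upow_Suc:
  assumes u: "ustar W * W = 1"
  shows "upow W (p + 1) = W * upow W p"
proof (cases "0 \<le> p")
  case True
  then have "nat (p + 1) = Suc (nat p)" by simp
  then show ?thesis using True by (simp add: upow_def)
next
  case False
  then have "0 < - p" by simp
  then obtain n0 where n0: "- p = int n0" "0 < n0" by (rule pos_int_cases)
  then obtain n where "n0 = Suc n" using gr0_implies_Suc by blast
  then have n: "nat (- p) = Suc n" "nat (- (p + 1)) = n" using n0 by auto
  have "W * upow W p = (ustar W * W) * ustar W ^ n" using False n by (simp add: upow_def algebra_simps)
  also have "\<dots> = ustar W ^ n" using u by simp
  finally show ?thesis using False n by (cases "p = -1") (auto simp: upow_def)
qed

lemma upow_pred:
  assumes u: "ustar W * W = 1"
  shows "upow W (p - 1) = ustar W * upow W p"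
proof -
  have "upow W p = W * upow W (p - 1)" using upow_Suc[OF u, of "p - 1"] by simp
  then have "ustar W * upow W p = (ustar W * W) * upow W (p - 1)" by (simp add: mult.assoc)
  then show ?thesis using u by simp
qed

lemma upow_add:
  assumes u: "ustar W * W = 1"
  shows "upow W (p + q) = upow W p * upow W q"
proof (induction q rule: int_induct[where k=0])
  case base then show ?case by simp
next
  case (step1 i)
  have "upow W (p + (i + 1)) = W * upow W (p + i)" using upow_Suc[OF u, of "p + i"] by (simp add: add.assoc)
  also have "\<dots> = upow W p * (W * upow W i)" using step1 by (simp add: algebra_simps)
  also have "W * upow W i = upow W (i + 1)" using upow_Suc[OF u] by simp
  finally show ?case .
next
  case (step2 i)
  have "upow W (p + (i - 1)) = ustar W * upow W (p + i)" using upow_pred[OF u, of "p + i"] by (simp add: algebra_simps)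
  also have "\<dots> = upow W p * (ustar W * upow W i)" using step2 by (simp add: algebra_simps)
  also have "ustar W * upow W i = upow W (i - 1)" using upow_pred[OF u] by simp
  finally show ?case .
qed

lemma ustar_upow: "ustar (upow W p) = upow W (- p)"
  by (auto simp: upow_def ustar_power)

lemma upow_unitary:
  assumes u: "ustar W * W = 1"
  shows "ustar (upow W p) * upow W p = 1"
  using upow_add[OF u, of "-p" p] by (simp add: ustar_upow)

definition umonom :: "(nat \<Rightarrow> 'a::comm_cstar_algebra unitization) \<Rightarrow> nat \<Rightarrow> (nat \<Rightarrow> int) \<Rightarrow> 'a unitization" where
  "umonom u m k = (\<Prod>j<m. upow (u j) (k j))"

definition unitary_family :: "(nat \<Rightarrow> 'a::comm_cstar_algebra unitization) \<Rightarrow> nat \<Rightarrow> bool" where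
  "unitary_family u m \<longleftrightarrow> (\<forall>j<m. ustar (u j) * u j = 1)"

lemma umonom_add:
  assumes "unitary_family u m"
  shows "umonom u m (\<lambda>j. k j + l j) = umonom u m k * umonom u m l"
  unfolding umonom_def using assms
  by (simp add: unitary_family_def upow_add prod.distrib[symmetric])

lemma umonom_unitary:
  assumes "unitary_family u m"
  shows "ustar (umonom u m k) * umonom u m k = 1"
  unfolding umonom_def using assms
  by (simp add: unitary_family_def ustar_prod upow_unitary prod.distrib[symmetric])
lemma umonom_zero [simp]: "umonom u m (\<lambda>_. 0) = 1"
  by (simp add: umonom_def)

definition delta :: "nat \<Rightarrow> nat \<Rightarrow> int" where "delta i = (\<lambda>j. if j = i then 1 else 0)"

lemma umonom_delta: "i < m \<Longrightarrow> umonom u m (delta i) = u i"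
proof -
  assume i: "i < m"
  have "umonom u m (delta i) = (\<Prod>j<m. if j = i then u i else 1)"
    unfolding umonom_def delta_def by (intro prod.cong) auto
  also have "\<dots> = u i" using i by (simp add: prod.delta)
  finally show ?thesis .
qed

lemma umonom_neg_delta: "i < m \<Longrightarrow> umonom u m (\<lambda>j. - delta i j) = ustar (u i)"
proof -
  assume i: "i < m"
  have "umonom u m (\<lambda>j. - delta i j) = (\<Prod>j<m. if j = i then ustar (u i) else 1)"
    unfolding umonom_def delta_def by (intro prod.cong) auto
  also have "\<dots> = ustar (u i)" using i by (simp add: prod.delta)
  finally show ?thesis .
qed

definition tchar :: "nat \<Rightarrow> (nat \<Rightarrow> int) \<Rightarrow> (nat \<Rightarrow> real) \<Rightarrow> complex" where
  "tchar m k t = exp (\<i> * complex_of_real (\<Sum>j<m. real_of_int (k j) * t j))"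

lemma tchar_add: "tchar m (\<lambda>j. k j + l j) t = tchar m k t * tchar m l t"
  by (simp add: tchar_def sum.distrib distrib_right distrib_left flip: exp_add)
lemma tchar_zero [simp]: "tchar m (\<lambda>_. 0) t = 1"
  by (simp add: tchar_def)

lemma tchar_cnj: "cnj (tchar m k t) = tchar m (\<lambda>j. - k j) t"
  by (simp add: tchar_def exp_cnj sum_negf)
lemma norm_tchar [simp]: "norm (tchar m k t) = 1"
  by (simp add: tchar_def)

lemma tchar_delta:
  assumes "i < m" shows "tchar m (delta i) t = exp (\<i> * complex_of_real (t i))"
proof -
  have "(\<Sum>j<m. real_of_int (delta i j) * t j) = (\<Sum>j<m. if j = i then t j else 0)"
    by (rule sum.cong) (auto simp: delta_def)
  also have "\<dots> = t i" using assms by (simp add: sum.delta)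
  finally show ?thesis by (simp add: tchar_def)
qed

lemma tchar_neg_delta:
  assumes "i < m" shows "tchar m (\<lambda>j. - delta i j) t = exp (- (\<i> * complex_of_real (t i)))"
proof -
  have "(\<Sum>j<m. real_of_int (- delta i j) * t j) = (\<Sum>j<m. if j = i then - t j else 0)"
    by (rule sum.cong) (auto simp: delta_def)
  also have "\<dots> = - t i" using assms by (simp add: sum.delta)
  finally show ?thesis by (simp add: tchar_def)
qed

definition freq_box :: "nat \<Rightarrow> nat \<Rightarrow> (nat \<Rightarrow> int) set" where
  "freq_box m d = {k. (\<forall>j<m. \<bar>k j\<bar> \<le> int d) \<and> (\<forall>j. m \<le> j \<longrightarrow> k j = 0)}"

lemma freq_box_iff: "k \<in> freq_box m d \<longleftrightarrow> (\<forall>j<m. \<bar>k j\<bar> \<le> int d) \<and> (\<forall>j. m \<le> j \<longrightarrow> k j = 0)"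
  unfolding freq_box_def by simp

lemma finite_freq_box: "finite (freq_box m d)"
proof (rule finite_subset)
  show "freq_box m d \<subseteq> {k. \<forall>j. (j \<in> {..<m} \<longrightarrow> k j \<in> {- int d..int d}) \<and> (j \<notin> {..<m} \<longrightarrow> k j = 0)}"
  proof (intro subsetI CollectI allI conjI impI)
    fix k j assume k: "k \<in> freq_box m d"
    { assume "j \<in> {..<m}" then have "\<bar>k j\<bar> \<le> int d" using k by (auto simp: freq_box_iff)
      then show "k j \<in> {- int d..int d}" by (simp add: abs_le_iff) }
    { assume "j \<notin> {..<m}" then show "k j = 0" using k by (auto simp: freq_box_iff) }
  qed
  show "finite {k. \<forall>j. (j \<in> {..<m} \<longrightarrow> k j \<in> {- int d..int d}) \<and> (j \<notin> {..<m} \<longrightarrow> k j = 0)}"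
    by (rule finite_set_of_finite_funs) auto
qed

lemma freq_box_mono: "d \<le> d' \<Longrightarrow> freq_box m d \<subseteq> freq_box m d'"
  by (force simp: freq_box_iff)

lemma freq_box_add:
  assumes "k \<in> freq_box m d1" "l \<in> freq_box m d2"
  shows "(\<lambda>j. k j + l j) \<in> freq_box m (d1 + d2)"
  unfolding freq_box_iff
proof (intro conjI allI impI)
  fix j assume "j < m"
  then have "\<bar>k j\<bar> \<le> int d1" "\<bar>l j\<bar> \<le> int d2" using assms by (auto simp: freq_box_iff)
  then show "\<bar>k j + l j\<bar> \<le> int (d1 + d2)" using abs_triangle_ineq[of "k j" "l j"] by simp
next
  fix j assume "m \<le> j" then show "k j + l j = 0" using assms by (auto simp: freq_box_iff)
qed

lemma freq_box_zero: "(\<lambda>_. 0) \<in> freq_box m d" by (simp add: freq_box_iff)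

lemma freq_box_delta: "i < m \<Longrightarrow> 1 \<le> d \<Longrightarrow> delta i \<in> freq_box m d"
  by (auto simp: freq_box_iff delta_def)

lemma freq_box_neg_delta: "i < m \<Longrightarrow> 1 \<le> d \<Longrightarrow> (\<lambda>j. - delta i j) \<in> freq_box m d"
  by (auto simp: freq_box_iff delta_def)

lemma card_freq_box: "card (freq_box m d) \<le> (2 * d + 1) ^ m"
proof -
  let ?P = "PiE {..<m} (\<lambda>_. {- int d..int d})"
  let ?f = "\<lambda>f j. if j < m then f j else (0::int)"
  have "freq_box m d \<subseteq> ?f ` ?P"
  proof
    fix k assume k: "k \<in> freq_box m d"
    have "restrict k {..<m} \<in> ?P" using k by (auto simp: freq_box_iff abs_le_iff)
    moreover have "k = ?f (restrict k {..<m})" using k by (auto simp: freq_box_iff)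
    ultimately show "k \<in> ?f ` ?P" by blast
  qed
  have fP: "finite ?P" by (intro finite_PiE) auto
  from \<open>freq_box m d \<subseteq> ?f ` ?P\<close> have "card (freq_box m d) \<le> card (?f ` ?P)" by (intro card_mono finite_imageI finite_PiE) auto
  also have "\<dots> \<le> card ?P" by (rule card_image_le[OF fP])
  also have "card ?P = (2 * d + 1) ^ m"
  proof -
    have "nat (2 * int d + 1) = Suc (2 * d)" by simp
    then show ?thesis by (simp add: card_PiE)
  qed
  finally show ?thesis .
qed

definition trig_rep :: "nat \<Rightarrow> (nat \<Rightarrow> 'a::comm_cstar_algebra unitization) \<Rightarrow> nat \<Rightarrow> ((nat \<Rightarrow> real) \<Rightarrow> complex) \<Rightarrow> 'a unitization \<Rightarrow> bool" where
  "trig_rep m u d F X \<longleftrightarrow> (\<exists>L. (\<forall>p\<in>set L. snd p \<in> freq_box m d) \<and>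
      (\<forall>t. F t = (\<Sum>p\<leftarrow>L. fst p * tchar m (snd p) t)) \<and>
      X = (\<Sum>p\<leftarrow>L. scal (fst p) * umonom u m (snd p)))"

lemma trig_rep_const: "trig_rep m u d (\<lambda>t. c) (scal c)"
  unfolding trig_rep_def by (rule exI[of _ "[(c, \<lambda>_. 0)]"]) (simp add: freq_box_zero)

lemma trig_rep_add:
  assumes "trig_rep m u d F X" "trig_rep m u d G Y"
  shows "trig_rep m u d (\<lambda>t. F t + G t) (X + Y)"
proof -
  obtain L1 where L1: "\<forall>p\<in>set L1. snd p \<in> freq_box m d" "\<forall>t. F t = (\<Sum>p\<leftarrow>L1. fst p * tchar m (snd p) t)"
    "X = (\<Sum>p\<leftarrow>L1. scal (fst p) * umonom u m (snd p))" using assms(1) unfolding trig_rep_def by blast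
  obtain L2 where L2: "\<forall>p\<in>set L2. snd p \<in> freq_box m d" "\<forall>t. G t = (\<Sum>p\<leftarrow>L2. fst p * tchar m (snd p) t)"
    "Y = (\<Sum>p\<leftarrow>L2. scal (fst p) * umonom u m (snd p))" using assms(2) unfolding trig_rep_def by blast
  show ?thesis unfolding trig_rep_def
    by (rule exI[of _ "L1 @ L2"]) (use L1 L2 in auto)
qed

lemma trig_rep_mono:
  assumes "trig_rep m u d F X" "d \<le> d'"
  shows "trig_rep m u d' F X"
  using assms freq_box_mono unfolding trig_rep_def by blast

lemma sum_list_mult_sum_list:
  fixes f g :: "'b \<Rightarrow> 'c::comm_ring"
  shows "(\<Sum>p\<leftarrow>L1. f p) * (\<Sum>q\<leftarrow>L2. g q) = (\<Sum>p\<leftarrow>L1. \<Sum>q\<leftarrow>L2. f p * g q)"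
  by (induction L1) (auto simp: distrib_right sum_list_const_mult)

lemma sum_list_concat_map: "sum_list (concat xs) = sum_list (map sum_list xs)"
  by (induction xs) auto

lemma trig_rep_mult:
  assumes "trig_rep m u d1 F X" "trig_rep m u d2 G Y" "unitary_family u m"
  shows "trig_rep m u (d1 + d2) (\<lambda>t. F t * G t) (X * Y)"
proof -
  obtain L1 where L1: "\<forall>p\<in>set L1. snd p \<in> freq_box m d1" "\<forall>t. F t = (\<Sum>p\<leftarrow>L1. fst p * tchar m (snd p) t)"
    "X = (\<Sum>p\<leftarrow>L1. scal (fst p) * umonom u m (snd p))" using assms(1) unfolding trig_rep_def by blast
  obtain L2 where L2: "\<forall>p\<in>set L2. snd p \<in> freq_box m d2" "\<forall>t. G t = (\<Sum>p\<leftarrow>L2. fst p * tchar m (snd p) t)"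
    "Y = (\<Sum>p\<leftarrow>L2. scal (fst p) * umonom u m (snd p))" using assms(2) unfolding trig_rep_def by blast
  let ?L = "concat (map (\<lambda>p. map (\<lambda>q. (fst p * fst q, \<lambda>j. snd p j + snd q j)) L2) L1)"
  have s: "(\<Sum>r\<leftarrow>?L. f r) = (\<Sum>p\<leftarrow>L1. \<Sum>q\<leftarrow>L2. f (fst p * fst q, \<lambda>j. snd p j + snd q j))"
    for f :: "complex \<times> (nat \<Rightarrow> int) \<Rightarrow> 'b::comm_monoid_add"
    by (simp add: sum_list_concat_map map_concat comp_def)
  show ?thesis unfolding trig_rep_def
  proof (intro exI[of _ ?L] conjI allI)
    show "\<forall>p\<in>set ?L. snd p \<in> freq_box m (d1 + d2)" using L1(1) L2(1) by (auto intro: freq_box_add)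
    fix t
    show "F t * G t = (\<Sum>p\<leftarrow>?L. fst p * tchar m (snd p) t)"
      unfolding s using L1(2) L2(2) by (simp add: sum_list_mult_sum_list tchar_add algebra_simps)
  next
    show "X * Y = (\<Sum>p\<leftarrow>?L. scal (fst p) * umonom u m (snd p))"
      unfolding s using L1(3) L2(3) assms(3)
      by (simp add: sum_list_mult_sum_list umonom_add scal_mult algebra_simps)
  qed
qed

lemma trig_rep_cos:
  assumes "i < m" "1 \<le> d"
  shows "trig_rep m u d (\<lambda>t. complex_of_real (cos (t i))) (scal (1/2) * (u i + ustar (u i)))"
  unfolding trig_rep_def
proof (intro exI[of _ "[(1/2, delta i), (1/2, \<lambda>j. - delta i j)]"] conjI allI)
  show "\<forall>p\<in>set [(1/2, delta i), (1/2, \<lambda>j. - delta i j)]. snd p \<in> freq_box m d"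
    using assms by (auto intro: freq_box_delta freq_box_neg_delta)
  fix t
  show "complex_of_real (cos (t i)) = (\<Sum>p\<leftarrow>[(1/2, delta i), (1/2, \<lambda>j. - delta i j)]. fst p * tchar m (snd p) t)"
    using assms by (simp add: tchar_delta tchar_neg_delta cos_exp_eq cos_of_real[symmetric] field_simps)
next
  show "scal (1/2) * (u i + ustar (u i)) = (\<Sum>p\<leftarrow>[(1/2, delta i), (1/2, \<lambda>j. - delta i j)]. scal (fst p) * umonom u m (snd p))"
    using assms by (simp add: umonom_delta umonom_neg_delta distrib_left)
qed

datatype pexp = Var nat | Cst real | Add pexp pexp | Mul pexp pexp

fun evalR :: "(nat \<Rightarrow> real) \<Rightarrow> pexp \<Rightarrow> real" where
  "evalR r (Var i) = r i"
| "evalR r (Cst c) = c"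
| "evalR r (Add e1 e2) = evalR r e1 + evalR r e2"
| "evalR r (Mul e1 e2) = evalR r e1 * evalR r e2"

fun evalU :: "(nat \<Rightarrow> 'a::comm_cstar_algebra unitization) \<Rightarrow> pexp \<Rightarrow> 'a unitization" where
  "evalU r (Var i) = r i"
| "evalU r (Cst c) = scal (complex_of_real c)"
| "evalU r (Add e1 e2) = evalU r e1 + evalU r e2"
| "evalU r (Mul e1 e2) = evalU r e1 * evalU r e2"

fun deg :: "pexp \<Rightarrow> nat" where
  "deg (Var i) = 1"
| "deg (Cst c) = 0"
| "deg (Add e1 e2) = max (deg e1) (deg e2)"
| "deg (Mul e1 e2) = deg e1 + deg e2"

fun vars_below :: "nat \<Rightarrow> pexp \<Rightarrow> bool" where
  "vars_below m (Var i) = (i < m)"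
| "vars_below m (Cst c) = True"
| "vars_below m (Add e1 e2) = (vars_below m e1 \<and> vars_below m e2)"
| "vars_below m (Mul e1 e2) = (vars_below m e1 \<and> vars_below m e2)"

lemma trig_rep_evalU:
  assumes "vars_below m e" "unitary_family u m"
  shows "trig_rep m u (deg e) (\<lambda>t. complex_of_real (evalR (\<lambda>j. cos (t j)) e))
            (evalU (\<lambda>j. scal (1/2) * (u j + ustar (u j))) e)"
  using assms(1)
proof (induction e)
  case (Var i) then show ?case using trig_rep_cos[of i m 1 u] by simp
next
  case (Cst c) then show ?case using trig_rep_const[of m u 0 "complex_of_real c"] by simp
next
  case (Add e1 e2)
  then have "trig_rep m u (max (deg e1) (deg e2)) (\<lambda>t. complex_of_real (evalR (\<lambda>j. cos (t j)) e1))
            (evalU (\<lambda>j. scal (1/2) * (u j + ustar (u j))) e1)"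
       "trig_rep m u (max (deg e1) (deg e2)) (\<lambda>t. complex_of_real (evalR (\<lambda>j. cos (t j)) e2))
            (evalU (\<lambda>j. scal (1/2) * (u j + ustar (u j))) e2)"
    by (auto intro: trig_rep_mono)
  from trig_rep_add[OF this] show ?case by simp
next
  case (Mul e1 e2)
  then show ?case using trig_rep_mult[OF _ _ assms(2)] by simp
qed

section \<open>Discrete Fourier averaging on the torus\<close>

lemma digits_eq_0:
  fixes a :: "nat \<Rightarrow> int" and B :: int
  assumes "0 < B" "\<forall>j<m. \<bar>a j\<bar> < B" "(\<Sum>j<m. a j * B ^ j) = 0"
  shows "\<forall>j<m. a j = 0"
  using assms(2,3)
proof (induction m arbitrary: a)
  case 0 then show ?case by simp
next
  case (Suc m)
  define S where "S = (\<Sum>j<m. a (Suc j) * B ^ j)"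
  have eq: "(\<Sum>j<Suc m. a j * B ^ j) = a 0 + B * S"
    unfolding S_def by (subst sum.lessThan_Suc_shift) (simp add: sum_distrib_left algebra_simps)
  have a0: "a 0 = - (B * S)" using Suc.prems(2) eq by simp
  have "S = 0"
  proof (rule ccontr)
    assume "S \<noteq> 0"
    then have "1 \<le> \<bar>S\<bar>" by simp
    then have "B \<le> \<bar>B * S\<bar>" using assms(1) by (simp add: abs_mult)
    moreover have "\<bar>a 0\<bar> < B" using Suc.prems(1) by simp
    ultimately show False using a0 by simp
  qed
  then have "a 0 = 0" using a0 by simp
  have "\<forall>j<m. a (Suc j) = 0"
    using Suc.IH[of "\<lambda>j. a (Suc j)"] Suc.prems(1) \<open>S = 0\<close> unfolding S_def by simp
  then show ?case using \<open>a 0 = 0\<close> by (auto simp: less_Suc_eq_0_disj)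
qed

lemma abs_digits_le:
  fixes a :: "nat \<Rightarrow> int" and B :: int
  assumes "0 < B" "\<forall>j<m. \<bar>a j\<bar> \<le> B - 1"
  shows "\<bar>\<Sum>j<m. a j * B ^ j\<bar> \<le> B ^ m - 1"
  using assms(2)
proof (induction m arbitrary: a)
  case 0 then show ?case by simp
next
  case (Suc m)
  define S where "S = (\<Sum>j<m. a (Suc j) * B ^ j)"
  have eq: "(\<Sum>j<Suc m. a j * B ^ j) = a 0 + B * S"
    unfolding S_def by (subst sum.lessThan_Suc_shift) (simp add: sum_distrib_left algebra_simps)
  have S: "\<bar>S\<bar> \<le> B ^ m - 1" using Suc.IH[of "\<lambda>j. a (Suc j)"] Suc.prems unfolding S_def by simp
  have "\<bar>a 0 + B * S\<bar> \<le> \<bar>a 0\<bar> + B * \<bar>S\<bar>" using abs_triangle_ineq[of "a 0" "B * S"] assms(1) by (simp add: abs_mult)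
  also have "\<dots> \<le> (B - 1) + B * (B ^ m - 1)"
    using Suc.prems S assms(1) by (intro add_mono mult_left_mono) auto
  also have "\<dots> = B ^ Suc m - 1" by (simp add: algebra_simps)
  finally show ?case using eq by simp
qed

lemma exp_two_pi_i_ratio_neq_1:
  fixes n :: int and M :: nat
  assumes "0 < M" "n \<noteq> 0" "\<bar>n\<bar> < int M"
  shows "exp (\<i> * complex_of_real (2 * pi * real_of_int n / real M)) \<noteq> 1"
proof
  assume "exp (\<i> * complex_of_real (2 * pi * real_of_int n / real M)) = 1"
  then obtain k :: int where "2 * pi * real_of_int n / real M = of_int (2 * k) * pi"
    unfolding exp_eq_1 by auto
  then have "real_of_int n = real_of_int k * real M" using assms(1) by (simp add: field_simps)
  then have nk: "n = k * int M" by (metis of_int_eq_iff of_int_mult of_int_of_nat_eq)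
  with assms(2) have "1 \<le> \<bar>k\<bar>" by auto
  then have "int M \<le> \<bar>k\<bar> * int M" using mult_right_mono[of 1 "\<bar>k\<bar>" "int M"] by simp
  then show False using nk assms(3) by (simp add: abs_mult)
qed

lemma sum_roots_of_unity:
  fixes n :: int and M :: nat
  assumes "0 < M" "n \<noteq> 0" "\<bar>n\<bar> < int M"
  shows "(\<Sum>s<M. exp (\<i> * complex_of_real (2 * pi * real s * real_of_int n / real M))) = 0"
proof -
  define w where "w = exp (\<i> * complex_of_real (2 * pi * real_of_int n / real M))"
  have "exp (\<i> * complex_of_real (2 * pi * real s * real_of_int n / real M)) = w ^ s" for s
  proof -
    have "\<i> * complex_of_real (2 * pi * real s * real_of_int n / real M)
        = of_nat s * (\<i> * complex_of_real (2 * pi * real_of_int n / real M))" by simp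
    then show ?thesis unfolding w_def by (simp only: exp_of_nat_mult)
  qed
  moreover have "w ^ M = 1"
  proof -
    have "w ^ M = exp (\<i> * complex_of_real (2 * pi * real_of_int n))"
      unfolding w_def exp_of_nat_mult[symmetric] using assms(1) by simp
    also have "\<dots> = 1" unfolding exp_eq_1 by (auto intro!: exI[of _ n])
    finally show ?thesis .
  qed
  moreover have "w \<noteq> 1" unfolding w_def by (rule exp_two_pi_i_ratio_neq_1[OF assms])
  ultimately show ?thesis by (simp add: sum_gp_strict)
qed

text \<open>With \<open>M = (2d+1)^m\<close>, the character with frequency \<open>k\<close> takes the value \<open>\<omega>^(s n)\<close> at the
  \<open>s\<close>-th sample point, where \<open>\<omega>\<close> is a primitive \<open>M\<close>-th root of unity and \<open>n\<close> has the base
  \<open>2d+1\<close> digits \<open>k j\<close>; distinct frequencies in the box give distinct \<open>n\<close> modulo \<open>M\<close>, so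
  the sampled characters are orthogonal.\<close>

definition sample_pt :: "nat \<Rightarrow> nat \<Rightarrow> nat \<Rightarrow> nat \<Rightarrow> real" where
  "sample_pt m d s j = 2 * pi * real s * real ((2 * d + 1) ^ j) / real ((2 * d + 1) ^ m)"

lemma tchar_sample_pt:
  "tchar m q (sample_pt m d s) = exp (\<i> * complex_of_real (2 * pi * real s *
      real_of_int (\<Sum>j<m. q j * int (2 * d + 1) ^ j) / real ((2 * d + 1) ^ m)))"
proof -
  have "(\<Sum>j<m. real_of_int (q j) * sample_pt m d s j) =
      2 * pi * real s * real_of_int (\<Sum>j<m. q j * int (2 * d + 1) ^ j) / real ((2 * d + 1) ^ m)"
    by (simp add: sample_pt_def sum_divide_distrib sum_distrib_left algebra_simps)
  then show ?thesis by (simp add: tchar_def)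
qed

lemma digit_sum_freq_box:
  assumes "k \<in> freq_box m d" "l \<in> freq_box m d" "k \<noteq> l"
  defines "n \<equiv> (\<Sum>j<m. (k j - l j) * int (2 * d + 1) ^ j)"
  shows "n \<noteq> 0" "\<bar>n\<bar> < int ((2 * d + 1) ^ m)"
proof -
  have digits: "\<bar>k j - l j\<bar> \<le> int (2 * d + 1) - 1" if "j < m" for j
    using assms(1,2) that unfolding freq_box_iff by fastforce
  show "n \<noteq> 0"
  proof
    assume "n = 0"
    then have "\<forall>j<m. k j - l j = 0"
      using digits_eq_0[of "int (2 * d + 1)" m "\<lambda>j. k j - l j"] digits unfolding n_def by fastforce
    moreover have "\<forall>j. m \<le> j \<longrightarrow> k j = l j" using assms(1,2) by (auto simp: freq_box_iff)
    ultimately have "k j = l j" for j by (cases "j < m") auto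
    with assms(3) show False by blast
  qed
  have "\<bar>n\<bar> \<le> int (2 * d + 1) ^ m - 1" unfolding n_def by (rule abs_digits_le) (use digits in auto)
  then show "\<bar>n\<bar> < int ((2 * d + 1) ^ m)" by simp
qed

lemma sampled_tchars_orthogonal:
  assumes k: "k \<in> freq_box m d" and l: "l \<in> freq_box m d"
  shows "(\<Sum>s<(2 * d + 1) ^ m. tchar m k (sample_pt m d s) * cnj (tchar m l (sample_pt m d s))) =
           (if k = l then of_nat ((2 * d + 1) ^ m) else 0)"
proof -
  define M where "M = (2 * d + 1) ^ m"
  define n where "n = (\<Sum>j<m. (k j - l j) * int (2 * d + 1) ^ j)"
  have "tchar m k (sample_pt m d s) * cnj (tchar m l (sample_pt m d s)) =
      exp (\<i> * complex_of_real (2 * pi * real s * real_of_int n / real M))" for s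
  proof -
    have "tchar m k (sample_pt m d s) * cnj (tchar m l (sample_pt m d s)) =
        tchar m (\<lambda>j. k j + - l j) (sample_pt m d s)"
      unfolding tchar_cnj by (rule tchar_add[symmetric])
    then show ?thesis by (simp add: tchar_sample_pt n_def M_def)
  qed
  moreover have "0 < M" by (simp add: M_def)
  ultimately show ?thesis
    using sum_roots_of_unity[of M n] digit_sum_freq_box[OF k l] unfolding M_def n_def
    by (cases "k = l") simp_all
qed

text \<open>Discrete Fourier inversion: a trigonometric polynomial is the average of its samples
  against the kernels below, each of which acts on \<open>A\<close> with norm at most the number of frequencies.\<close>

definition sampling_kernel :: "nat \<Rightarrow> nat \<Rightarrow> (nat \<Rightarrow> 'a::comm_cstar_algebra unitization) \<Rightarrow> nat \<Rightarrow> 'a unitization" where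
  "sampling_kernel m d u s = (\<Sum>j\<in>freq_box m d. scal (cnj (tchar m j (sample_pt m d s))) * umonom u m j)"

lemma sampled_sum_umonom:
  assumes k: "k \<in> freq_box m d"
  defines "M \<equiv> (2 * d + 1) ^ m"
  shows "(\<Sum>s<M. scal (c * tchar m k (sample_pt m d s) / of_nat M) * sampling_kernel m d u s) = scal c * umonom u m k"
proof -
  let ?t = "sample_pt m d" and ?K = "freq_box m d"
  have "scal a * sampling_kernel m d u s = (\<Sum>j\<in>?K. scal (a * cnj (tchar m j (?t s))) * umonom u m j)" for a s
    unfolding sampling_kernel_def sum_distrib_left by (intro sum.cong refl) (simp add: scal_mult mult.assoc)
  then have "(\<Sum>s<M. scal (c * tchar m k (?t s) / of_nat M) * sampling_kernel m d u s) =
        (\<Sum>j\<in>?K. scal (\<Sum>s<M. c * tchar m k (?t s) / of_nat M * cnj (tchar m j (?t s))) * umonom u m j)"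
    by (simp add: sum.swap[where A = "{..<M}"] sum_distrib_right scal_sum)
  also have "\<dots> = (\<Sum>j\<in>?K. scal (c / of_nat M * (\<Sum>s<M. tchar m k (?t s) * cnj (tchar m j (?t s)))) * umonom u m j)"
    by (intro sum.cong refl arg_cong2[where f = "(*)"] arg_cong[where f = scal]) (simp add: sum_distrib_left mult_ac)
  also have "\<dots> = (\<Sum>j\<in>?K. if k = j then scal c * umonom u m j else 0)"
  proof (intro sum.cong refl)
    fix j assume "j \<in> ?K"
    then have "(\<Sum>s<M. tchar m k (?t s) * cnj (tchar m j (?t s))) = (if k = j then of_nat M else 0)"
      using sampled_tchars_orthogonal[OF k] unfolding M_def by blast
    moreover have "M \<noteq> 0" by (simp add: M_def)
    ultimately show "scal (c / of_nat M * (\<Sum>s<M. tchar m k (?t s) * cnj (tchar m j (?t s)))) * umonom u m j =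
        (if k = j then scal c * umonom u m j else 0)" by simp
  qed
  also have "\<dots> = scal c * umonom u m k" using k finite_freq_box by (simp add: sum.delta)
  finally show ?thesis .
qed

lemma trig_rep_sampled_sum:
  assumes "trig_rep m u d F X"
  defines "M \<equiv> (2 * d + 1) ^ m"
  shows "X = (\<Sum>s<M. scal (F (sample_pt m d s) / of_nat M) * sampling_kernel m d u s)"
proof -
  obtain L where L: "\<forall>p\<in>set L. snd p \<in> freq_box m d" "\<forall>t. F t = (\<Sum>p\<leftarrow>L. fst p * tchar m (snd p) t)"
    "X = (\<Sum>p\<leftarrow>L. scal (fst p) * umonom u m (snd p))" using assms(1) unfolding trig_rep_def by blast
  have "(\<Sum>s<M. scal ((\<Sum>p\<leftarrow>L. fst p * tchar m (snd p) (sample_pt m d s)) / of_nat M) * sampling_kernel m d u s) =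
        (\<Sum>p\<leftarrow>L. scal (fst p) * umonom u m (snd p))"
    using L(1)
  proof (induction L)
    case (Cons p L)
    have "(\<Sum>s<M. scal ((\<Sum>p\<leftarrow>p # L. fst p * tchar m (snd p) (sample_pt m d s)) / of_nat M) * sampling_kernel m d u s) =
        (\<Sum>s<M. scal (fst p * tchar m (snd p) (sample_pt m d s) / of_nat M) * sampling_kernel m d u s) +
        (\<Sum>s<M. scal ((\<Sum>p\<leftarrow>L. fst p * tchar m (snd p) (sample_pt m d s)) / of_nat M) * sampling_kernel m d u s)"
      by (simp add: add_divide_distrib scal_add distrib_right sum.distrib)
    then show ?case using Cons sampled_sum_umonom[of "snd p" m d "fst p" u] by (simp add: M_def)
  qed simp
  then show ?thesis using L(2,3) by simp
qed

lemma norm_act_sampling_kernel_le: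
  assumes "unitary_family u m"
  shows "norm (act (sampling_kernel m d u s) z) \<le> real (card (freq_box m d)) * norm z"
proof -
  have "norm (act (sampling_kernel m d u s) z) =
        norm (\<Sum>j\<in>freq_box m d. scaleC (cnj (tchar m j (sample_pt m d s))) (act (umonom u m j) z))"
    unfolding sampling_kernel_def by (simp add: act_sum act_scal)
  also have "\<dots> \<le> (\<Sum>j\<in>freq_box m d. norm (scaleC (cnj (tchar m j (sample_pt m d s))) (act (umonom u m j) z)))"
    by (rule norm_sum)
  also have "\<dots> = (\<Sum>j\<in>freq_box m d. norm z)"
    by (intro sum.cong refl) (simp add: norm_scaleC act_unitary[OF umonom_unitary[OF assms]])
  finally show ?thesis by simp
qed

lemma norm_act_trig_rep_le:
  assumes X: "trig_rep m u d F X" and u: "unitary_family u m" and F: "\<And>t. norm (F t) \<le> B"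
  shows "norm (act X z) \<le> real (card (freq_box m d)) * B * norm z"
proof -
  define M where "M = (2 * d + 1) ^ m"
  have "0 < M" by (simp add: M_def)
  have "0 \<le> B" using F[of undefined] norm_ge_zero[of "F undefined"] by linarith
  have "norm (act X z) = norm (\<Sum>s<M. scaleC (F (sample_pt m d s) / of_nat M) (act (sampling_kernel m d u s) z))"
    by (subst trig_rep_sampled_sum[OF X]) (simp add: M_def act_sum act_scal)
  also have "\<dots> \<le> (\<Sum>s<M. norm (scaleC (F (sample_pt m d s) / of_nat M) (act (sampling_kernel m d u s) z)))"
    by (rule norm_sum)
  also have "\<dots> \<le> (\<Sum>s<M. B / real M * (real (card (freq_box m d)) * norm z))"
  proof (intro sum_mono)
    fix s
    have "norm (F (sample_pt m d s) / of_nat M) \<le> B / real M"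
      using F \<open>0 < M\<close> by (simp add: norm_divide divide_right_mono)
    then show "norm (scaleC (F (sample_pt m d s) / of_nat M) (act (sampling_kernel m d u s) z))
        \<le> B / real M * (real (card (freq_box m d)) * norm z)"
      unfolding norm_scaleC using \<open>0 \<le> B\<close> by (intro mult_mono norm_act_sampling_kernel_le u) auto
  qed
  also have "\<dots> = real (card (freq_box m d)) * B * norm z" using \<open>0 < M\<close> by simp
  finally show ?thesis .
qed

section \<open>A von Neumann inequality for real polynomials\<close>

lemma le_root_of_power_bound:
  fixes a b :: real
  assumes a: "0 \<le> a" and b: "0 \<le> b" and N: "1 \<le> N"
    and bound: "a ^ N \<le> (2 * real N * real D + 1) ^ m * b ^ N"
  shows "a \<le> (root N (2 * real D + 1) * root N (real N)) ^ m * b"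
proof -
  have "(2 * real N * real D + 1) ^ m \<le> ((2 * real D + 1) * real N) ^ m"
    using N by (intro power_mono) (auto simp: algebra_simps)
  then have "a ^ N \<le> ((2 * real D + 1) * real N) ^ m * b ^ N"
    using bound b by (meson mult_right_mono order_trans zero_le_power)
  then have "root N (a ^ N) \<le> root N (((2 * real D + 1) * real N) ^ m * b ^ N)"
    using N by (intro real_root_le_mono) auto
  then show ?thesis
    using N a b by (simp add: real_root_mult real_root_power real_root_power_cancel)
qed

lemma le_of_power_growth:
  fixes a b :: real and D m :: nat
  assumes a: "0 \<le> a" and b: "0 \<le> b"
    and bound: "\<And>k. a ^ (2 ^ Suc k - 1) \<le> (2 * real (2 ^ Suc k - 1) * real D + 1) ^ m * b ^ (2 ^ Suc k - 1)"
  shows "a \<le> b"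
proof -
  define g where "g k = (2::nat) ^ Suc k - 1" for k
  have "strict_mono g" unfolding strict_mono_def g_def
    by (auto intro!: diff_less_mono power_strict_increasing)
  moreover have "(\<lambda>N. (root N (2 * real D + 1) * root N (real N)) ^ m) \<longlonglongrightarrow> (1 * 1) ^ m"
    by (intro tendsto_power tendsto_mult LIMSEQ_root_const LIMSEQ_root) simp
  ultimately have "(\<lambda>k. (root (g k) (2 * real D + 1) * root (g k) (real (g k))) ^ m * b) \<longlonglongrightarrow> 1 * b"
    by (intro tendsto_mult tendsto_const) (auto dest: LIMSEQ_subseq_LIMSEQ simp: comp_def)
  moreover have "1 \<le> g k" for k
    using one_le_power[of "2::nat" k] unfolding g_def power_Suc by linarith
  then have "a \<le> (root (g k) (2 * real D + 1) * root (g k) (real (g k))) ^ m * b" for k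
    using le_root_of_power_bound[OF a b _ bound[of k, folded g_def]] by blast
  ultimately show ?thesis by (intro LIMSEQ_le_const) auto
qed

fun ppow :: "pexp \<Rightarrow> nat \<Rightarrow> pexp" where
  "ppow e 0 = Cst 1"
| "ppow e (Suc n) = Mul e (ppow e n)"

lemma evalU_ppow: "evalU r (ppow e n) = (evalU r e) ^ n"
  by (induction n) auto
lemma evalR_ppow: "evalR r (ppow e n) = (evalR r e) ^ n"
  by (induction n) auto
lemma deg_ppow: "deg (ppow e n) = n * deg e"
  by (induction n) auto
lemma vars_below_ppow: "vars_below m e \<Longrightarrow> vars_below m (ppow e n)"
  by (induction n) auto

lemma evalU_cong: "vars_below m e \<Longrightarrow> (\<And>j. j < m \<Longrightarrow> r j = r' j) \<Longrightarrow> evalU r e = evalU r' e"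
  by (induction e) auto
lemma uC_evalU: "uC (evalU (\<lambda>j. emb (w j)) e) = complex_of_real (evalR (\<lambda>_. 0) e)"
  by (induction e) auto

lemma star_evalU:
  assumes "\<And>j. star (w j) = w j"
  shows "ustar (evalU (\<lambda>j. emb (w j)) e) = evalU (\<lambda>j. emb (w j)) e"
  by (induction e) (auto simp: ustar_add ustar_mult ustar_scal ustar_emb assms)

definition evalA :: "(nat \<Rightarrow> 'a::comm_cstar_algebra) \<Rightarrow> pexp \<Rightarrow> 'a" where
  "evalA w e = uA (evalU (\<lambda>j. emb (w j)) e)"

lemma emb_evalA:
  assumes "evalR (\<lambda>_. 0) e = 0"
  shows "emb (evalA w e) = evalU (\<lambda>j. emb (w j)) e"
  by (rule unitization_eqI) (simp_all add: evalA_def uC_evalU assms)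

lemma star_evalA:
  assumes "\<And>j. star (w j) = w j" shows "star (evalA w e) = evalA w e"
  using star_evalU[of w e, OF assms] unfolding evalA_def by (metis emb_simps(5) ustar_def unitization.sel(1))

lemma norm_npow_selfadjoint:
  assumes "star y = y"
  shows "norm (npow y (2 ^ k - 1)) = norm y ^ (2 ^ k)"
proof (induction k)
  case (Suc k)
  let ?z = "npow y (2 ^ k - 1)"
  have "Suc (2 ^ Suc k - 1) = Suc (2 ^ k - 1) + Suc (2 ^ k - 1)" by simp
  then have "emb (npow y (2 ^ Suc k - 1)) = emb (?z * ?z)"
    by (simp only: emb_npow emb_mult power_add[symmetric])
  then have "npow y (2 ^ Suc k - 1) = star ?z * ?z" by (metis emb_simps(1) assms star_npow)
  then have "norm (npow y (2 ^ Suc k - 1)) = (norm ?z)\<^sup>2" by (simp only: cstar_identity)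
  then show ?case using Suc by (simp add: power_mult[symmetric] mult.commute)
qed simp

text \<open>Along \<open>N = 2^k - 1\<close> the C*-identity gives \<open>norm (npow y N) = norm y ^ (N + 1)\<close>, and taking
  \<open>N\<close>-th roots removes the polynomial factor.\<close>

lemma selfadjoint_norm_le_of_npow_bound:
  assumes "star y = y" "0 \<le> B"
    and bound: "\<And>N. norm (npow y N) \<le> (2 * real N * real d + 1) ^ m * B ^ N * norm y"
  shows "norm y \<le> B"
proof (cases "y = 0")
  case False
  have "norm y ^ N \<le> (2 * real N * real d + 1) ^ m * B ^ N" if "N = 2 ^ Suc k - 1" for N k
  proof -
    have "norm y ^ N * norm y = norm (npow y N)"
      using norm_npow_selfadjoint[OF assms(1), of "Suc k"] that by (simp flip: power_Suc2)
    also have "\<dots> \<le> (2 * real N * real d + 1) ^ m * B ^ N * norm y" by (rule bound)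
    finally show ?thesis using False by simp
  qed
  then show ?thesis by (intro le_of_power_growth[OF norm_ge_zero assms(2), where D = d and m = m]) blast
qed (use assms(2) in simp)

text \<open>Writing each \<open>w j\<close> as the real part of its unitary lift turns \<open>p(w)^N\<close> into a trigonometric
  polynomial of degree \<open>N deg p\<close> which is bounded by \<open>B^N\<close> on the torus.\<close>

lemma norm_npow_evalA_le:
  fixes w :: "nat \<Rightarrow> 'a::comm_cstar_algebra"
  assumes w: "\<And>j. star (w j) = w j" "\<And>j. j < m \<Longrightarrow> norm (w j) < 1"
    and e: "vars_below m e" "evalR (\<lambda>_. 0) e = 0"
    and bound: "\<And>\<theta>. (\<And>j. \<bar>\<theta> j\<bar> \<le> 1) \<Longrightarrow> \<bar>evalR \<theta> e\<bar> \<le> B"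
  shows "norm (npow (evalA w e) N) \<le> (2 * real N * real (deg e) + 1) ^ m * B ^ N * norm (evalA w e)"
proof -
  define u where "u j = unitary_lift (w j)" for j
  have u: "unitary_family u m" unfolding unitary_family_def u_def using unitary_lift(1)[OF w(2) w(1)] by blast
  have ev: "evalU (\<lambda>j. scal (1/2) * (u j + ustar (u j))) (ppow e N) = evalU (\<lambda>j. emb (w j)) (ppow e N)"
    by (rule evalU_cong[OF vars_below_ppow[OF e(1)]]) (simp add: u_def unitary_lift(2)[OF w(2) w(1)])
  have rep: "trig_rep m u (N * deg e) (\<lambda>t. complex_of_real (evalR (\<lambda>j. cos (t j)) (ppow e N)))
      (evalU (\<lambda>j. emb (w j)) (ppow e N))"
    using trig_rep_evalU[OF vars_below_ppow[OF e(1)] u, of N] unfolding ev deg_ppow .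
  have F: "norm (complex_of_real (evalR (\<lambda>j. cos (t j)) (ppow e N))) \<le> B ^ N" for t
    using bound[of "\<lambda>j. cos (t j)"] by (simp add: evalR_ppow norm_power power_mono)
  have act_eq: "act (evalU (\<lambda>j. emb (w j)) (ppow e N)) (evalA w e) = npow (evalA w e) N"
  proof -
    have "emb (npow (evalA w e) N) = evalU (\<lambda>j. emb (w j)) (ppow e N) * emb (evalA w e)"
      by (simp add: emb_npow evalU_ppow emb_evalA[OF e(2)] mult.commute)
    then show ?thesis by (metis act_emb emb_simps(1))
  qed
  have "norm (npow (evalA w e) N) \<le> real (card (freq_box m (N * deg e))) * B ^ N * norm (evalA w e)"
    using norm_act_trig_rep_le[OF rep u F, of "evalA w e"] unfolding act_eq .
  also have "\<dots> \<le> real ((2 * (N * deg e) + 1) ^ m) * B ^ N * norm (evalA w e)"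
    using card_freq_box[of m "N * deg e"] bound[of "\<lambda>_. 0"]
    by (intro mult_right_mono) (simp_all only: of_nat_le_iff, auto)
  also have "real ((2 * (N * deg e) + 1) ^ m) = (2 * real N * real (deg e) + 1) ^ m"
    by (simp add: mult.assoc add.commute)
  finally show ?thesis .
qed

theorem norm_evalA_le:
  fixes w :: "nat \<Rightarrow> 'a::comm_cstar_algebra"
  assumes w: "\<And>j. star (w j) = w j" "\<And>j. j < m \<Longrightarrow> norm (w j) < 1"
    and e: "vars_below m e" "evalR (\<lambda>_. 0) e = 0"
    and bound: "\<And>\<theta>. (\<And>j. \<bar>\<theta> j\<bar> \<le> 1) \<Longrightarrow> \<bar>evalR \<theta> e\<bar> \<le> B"
  shows "norm (evalA w e) \<le> B"
  by (rule selfadjoint_norm_le_of_npow_bound[OF star_evalA[OF w(1)] _ norm_npow_evalA_le[OF w e bound]])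
    (use bound[of "\<lambda>_. 0"] in simp)

fun subst :: "(nat \<Rightarrow> pexp) \<Rightarrow> pexp \<Rightarrow> pexp" where
  "subst \<sigma> (Var i) = \<sigma> i"
| "subst \<sigma> (Cst c) = Cst c"
| "subst \<sigma> (Add e1 e2) = Add (subst \<sigma> e1) (subst \<sigma> e2)"
| "subst \<sigma> (Mul e1 e2) = Mul (subst \<sigma> e1) (subst \<sigma> e2)"

lemma evalR_subst: "evalR r (subst \<sigma> e) = evalR (\<lambda>j. evalR r (\<sigma> j)) e"
  by (induction e) auto
lemma evalU_subst: "evalU r (subst \<sigma> e) = evalU (\<lambda>j. evalU r (\<sigma> j)) e"
  by (induction e) auto
lemma vars_below_subst: "vars_below k e \<Longrightarrow> (\<And>j. j < k \<Longrightarrow> vars_below m (\<sigma> j)) \<Longrightarrow> vars_below m (subst \<sigma> e)"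
  by (induction e) auto

definition Sub :: "pexp \<Rightarrow> pexp \<Rightarrow> pexp" where "Sub e1 e2 = Add e1 (Mul (Cst (-1)) e2)"
lemma evalR_Sub [simp]: "evalR r (Sub e1 e2) = evalR r e1 - evalR r e2"
  by (simp add: Sub_def)
lemma vars_below_Sub [simp]: "vars_below m (Sub e1 e2) = (vars_below m e1 \<and> vars_below m e2)"
  by (simp add: Sub_def)

lemma uA_scal_mult: "uA (scal c * Y) = scaleC c (uA Y)" by simp

lemma evalA_Add: "evalA w (Add e1 e2) = evalA w e1 + evalA w e2"
  by (simp add: evalA_def)

lemma evalA_Sub: "evalA w (Sub e1 e2) = evalA w e1 - evalA w e2"
proof -
  have "uA (scal (complex_of_real (-1)) * evalU (\<lambda>j. emb (w j)) e2) = - uA (evalU (\<lambda>j. emb (w j)) e2)"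
    unfolding uA_scal_mult by (simp add: scaleC_minus_left scaleC_one)
  then show ?thesis by (simp add: evalA_def Sub_def del: uA_simps(11))
qed

lemma evalA_Mul:
  assumes "evalR (\<lambda>_. 0) e1 = 0" "evalR (\<lambda>_. 0) e2 = 0"
  shows "evalA w (Mul e1 e2) = evalA w e1 * evalA w e2"
  using assms by (simp add: evalA_def uC_evalU)

lemma cstar_gen:
  shows "cstar_subalgebra (cstar_gen S)" and "S \<subseteq> cstar_gen S"
proof -
  show "S \<subseteq> cstar_gen S" unfolding cstar_gen_def by blast
  show "cstar_subalgebra (cstar_gen S)"
    unfolding cstar_subalgebra_def cstar_gen_def
    by (auto intro!: closed_Inter simp: cstar_subalgebra_def)
qed

lemma uA_evalU_in_subalgebra:
  assumes B: "cstar_subalgebra B" and v: "\<And>j. v j \<in> B"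
  shows "uA (evalU (\<lambda>j. emb (v j)) e) \<in> B"
proof (induction e)
  case (Var i) then show ?case using v by simp
next
  case (Cst c) then show ?case using B by (simp add: cstar_subalgebra_def scal_def)
next
  case (Add e1 e2) then show ?case using B by (simp add: cstar_subalgebra_def)
next
  case (Mul e1 e2) then show ?case using B by (simp add: cstar_subalgebra_def)
qed

section \<open>A continuous functional calculus for commuting pairs\<close>

lemma closed_subalgebra_LIMSEQ:
  assumes "cstar_subalgebra B" "\<And>n. X n \<in> B" "X \<longlonglongrightarrow> l" shows "l \<in> B"
  using assms closed_sequentially unfolding cstar_subalgebra_def by blast

lemma star_LIMSEQ_selfadjoint:
  fixes X :: "nat \<Rightarrow> 'a::comm_cstar_algebra"
  assumes "X \<longlonglongrightarrow> l" "\<And>n. star (X n) = X n" shows "star l = l"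
proof -
  have "(\<lambda>n. star (X n)) \<longlonglongrightarrow> star l" by (rule bounded_linear.tendsto[OF bounded_linear_star assms(1)])
  then show ?thesis using assms LIMSEQ_unique by fastforce
qed

lemma evalA_in_subalgebra:
  assumes "cstar_subalgebra B" "\<And>j. w j \<in> B"
  shows "evalA w e \<in> B"
  unfolding evalA_def by (rule uA_evalU_in_subalgebra[OF assms])

definition vanishing_pexp :: "nat \<Rightarrow> pexp \<Rightarrow> bool" where
  "vanishing_pexp m e \<longleftrightarrow> vars_below m e \<and> evalR (\<lambda>_. 0) e = 0"

lemma vanishing_pexp_Sub: "vanishing_pexp m e1 \<Longrightarrow> vanishing_pexp m e2 \<Longrightarrow> vanishing_pexp m (Sub e1 e2)"
  by (simp add: vanishing_pexp_def)

lemma vanishing_pexp_Mul: "vanishing_pexp m e1 \<Longrightarrow> vanishing_pexp m e2 \<Longrightarrow> vanishing_pexp m (Mul e1 e2)"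
  by (simp add: vanishing_pexp_def)

lemma evalA_subst:
  assumes "\<And>j. evalR (\<lambda>_. 0) (\<sigma> j) = 0"
  shows "evalA w (subst \<sigma> e) = evalA (\<lambda>j. evalA w (\<sigma> j)) e"
proof -
  have "(\<lambda>j. evalU (\<lambda>i. emb (w i)) (\<sigma> j)) = (\<lambda>j. emb (evalA w (\<sigma> j)))"
    by (rule ext) (simp add: emb_evalA[OF assms])
  then show ?thesis by (simp add: evalA_def evalU_subst)
qed

lemma norm_evalA_subst_le:
  fixes w :: "nat \<Rightarrow> 'a::comm_cstar_algebra"
  assumes w: "\<And>j. star (w j) = w j" "\<And>j. j < m \<Longrightarrow> norm (w j) < 1"
    and \<sigma>: "\<And>j. j < k \<Longrightarrow> vanishing_pexp m (\<sigma> j)" "\<And>j. evalR (\<lambda>_. 0) (\<sigma> j) = 0"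
    and e: "vanishing_pexp k e"
    and bound: "\<And>\<theta>. (\<And>j. \<bar>\<theta> j\<bar> \<le> 1) \<Longrightarrow> \<bar>evalR (\<lambda>j. evalR \<theta> (\<sigma> j)) e\<bar> \<le> B"
  shows "norm (evalA (\<lambda>j. evalA w (\<sigma> j)) e) \<le> B"
proof -
  have "norm (evalA w (subst \<sigma> e)) \<le> B"
  proof (rule norm_evalA_le[OF w])
    show "vars_below m (subst \<sigma> e)"
      using e \<sigma>(1) by (auto simp: vanishing_pexp_def intro: vars_below_subst)
    show "evalR (\<lambda>_. 0) (subst \<sigma> e) = 0"
      using e \<sigma>(2) by (simp add: evalR_subst vanishing_pexp_def)
  next
    fix \<theta> :: "nat \<Rightarrow> real" assume "\<And>j. \<bar>\<theta> j\<bar> \<le> 1"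
    then show "\<bar>evalR \<theta> (subst \<sigma> e)\<bar> \<le> B" by (simp add: evalR_subst bound)
  qed
  then show ?thesis by (simp add: evalA_subst[OF \<sigma>(2)])
qed

definition vec2 :: "'b \<Rightarrow> 'b \<Rightarrow> nat \<Rightarrow> 'b" where
  "vec2 x y j = (if j = 0 then x else y)"

definition peval2 :: "pexp \<Rightarrow> real \<times> real \<Rightarrow> real" where
  "peval2 e z = evalR (vec2 (fst z) (snd z)) e"

lemma evalA_vec2_Var [simp]: "evalA (vec2 p q) (Var 0) = p" "evalA (vec2 p q) (Var (Suc 0)) = q"
  by (simp_all add: evalA_def vec2_def)

lemma peval2_simps [simp]:
  "peval2 (Var 0) z = fst z" "peval2 (Var (Suc 0)) z = snd z" "peval2 (Cst c) z = c"
  "peval2 (Add e1 e2) z = peval2 e1 z + peval2 e2 z" "peval2 (Mul e1 e2) z = peval2 e1 z * peval2 e2 z"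
  "peval2 (Sub e1 e2) z = peval2 e1 z - peval2 e2 z"
  by (simp_all add: peval2_def vec2_def)

lemma peval2_origin: "peval2 e (0, 0) = evalR (\<lambda>_. 0) e"
proof -
  have "vec2 0 0 = (\<lambda>_. 0 :: real)" by (auto simp: vec2_def)
  then show ?thesis by (simp add: peval2_def)
qed

lemma pexp_of_polynomial_function:
  fixes f :: "real \<times> real \<Rightarrow> real"
  assumes "real_polynomial_function f"
  shows "\<exists>e. vars_below 2 e \<and> peval2 e = f"
  using assms
proof (induction f rule: real_polynomial_function.induct)
  case (linear f)
  define e where "e = Add (Mul (Var 0) (Cst (f (1, 0)))) (Mul (Var 1) (Cst (f (0, 1))))"
  have "peval2 e z = f z" for z
  proof -
    have lin: "linear f" using linear by (rule bounded_linear.linear)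
    have "z = fst z *\<^sub>R (1, 0) + snd z *\<^sub>R (0, 1)" by (simp add: prod_eq_iff)
    then have "f z = f (fst z *\<^sub>R (1, 0) + snd z *\<^sub>R (0, 1))" by simp
    also have "\<dots> = fst z *\<^sub>R f (1, 0) + snd z *\<^sub>R f (0, 1)"
      by (simp only: linear_add[OF lin] linear_scale[OF lin])
    finally show ?thesis by (simp add: e_def)
  qed
  then show ?case by (intro exI[of _ e]) (auto simp: e_def fun_eq_iff)
next
  case (const c)
  show ?case by (intro exI[of _ "Cst c"]) auto
next
  case (add f g)
  then obtain e1 e2 where "vars_below 2 e1" "peval2 e1 = f" "vars_below 2 e2" "peval2 e2 = g" by blast
  then show ?case by (intro exI[of _ "Add e1 e2"]) auto
next
  case (mult f g)
  then obtain e1 e2 where "vars_below 2 e1" "peval2 e1 = f" "vars_below 2 e2" "peval2 e2 = g" by blast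
  then show ?case by (intro exI[of _ "Mul e1 e2"]) auto
qed

definition polys_approx :: "(real \<times> real) set \<Rightarrow> (real \<times> real \<Rightarrow> real) \<Rightarrow> (nat \<Rightarrow> pexp) \<Rightarrow> bool" where
  "polys_approx K f Q \<longleftrightarrow>
     (\<forall>n. vanishing_pexp 2 (Q n)) \<and> uniform_limit K (\<lambda>n. peval2 (Q n)) f sequentially"

lemma polys_approx_exists:
  assumes K: "compact K" "(0, 0) \<in> K" and f: "continuous_on K f" "f (0, 0) = 0"
  shows "\<exists>Q. polys_approx K f Q"
proof -
  have "\<exists>e. vanishing_pexp 2 e \<and> (\<forall>z\<in>K. \<bar>peval2 e z - f z\<bar> < inverse (real (Suc n)))" for n
  proof -
    define \<epsilon> where "\<epsilon> = inverse (real (Suc n)) / 2"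
    have "0 < \<epsilon>" by (simp add: \<epsilon>_def)
    then obtain g where g: "polynomial_function g" "\<forall>z\<in>K. norm (f z - g z) < \<epsilon>"
      using Stone_Weierstrass_polynomial_function[OF K(1) f(1)] by blast
    obtain e where e: "vars_below 2 e" "peval2 e = g"
      using pexp_of_polynomial_function g(1) real_polynomial_function_eq by blast
    have g0: "\<bar>g (0, 0)\<bar> < \<epsilon>" using g(2) K(2) f(2) by fastforce
    have "evalR (\<lambda>_. 0) e = g (0, 0)" using e(2) peval2_origin[of e] by simp
    then have "vanishing_pexp 2 (Sub e (Cst (g (0, 0))))" using e(1) by (simp add: vanishing_pexp_def)
    moreover have "\<bar>peval2 (Sub e (Cst (g (0, 0)))) z - f z\<bar> < inverse (real (Suc n))" if "z \<in> K" for z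
    proof -
      have "\<bar>f z - g z\<bar> < \<epsilon>" using g(2) that by simp
      moreover have "peval2 (Sub e (Cst (g (0, 0)))) z = g z - g (0, 0)" by (simp add: e(2))
      ultimately show ?thesis using g0 unfolding \<epsilon>_def by linarith
    qed
    ultimately show ?thesis by blast
  qed
  then obtain Q where Q: "\<And>n. vanishing_pexp 2 (Q n)"
    "\<And>n z. z \<in> K \<Longrightarrow> \<bar>peval2 (Q n) z - f z\<bar> < inverse (real (Suc n))"
    by metis
  have "uniform_limit K (\<lambda>n. peval2 (Q n)) f sequentially"
  proof (rule uniform_limitI)
    fix \<epsilon> :: real assume "0 < \<epsilon>"
    with LIMSEQ_inverse_real_of_nat have "\<forall>\<^sub>F n in sequentially. inverse (real (Suc n)) < \<epsilon>"
      by (rule order_tendstoD)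
    then show "\<forall>\<^sub>F n in sequentially. \<forall>z\<in>K. dist (peval2 (Q n) z) (f z) < \<epsilon>"
      by (rule eventually_mono) (metis Q(2) dist_real_def less_trans)
  qed
  with Q(1) show ?thesis unfolding polys_approx_def by blast
qed

definition approx_polys :: "(real \<times> real) set \<Rightarrow> (real \<times> real \<Rightarrow> real) \<Rightarrow> nat \<Rightarrow> pexp" where
  "approx_polys K f = (SOME Q. polys_approx K f Q)"

lemma polys_approx_approx_polys:
  assumes "compact K" "(0, 0) \<in> K" "continuous_on K f" "f (0, 0) = 0"
  shows "polys_approx K f (approx_polys K f)"
  unfolding approx_polys_def using polys_approx_exists[OF assms] by (rule someI_ex)

text \<open>Junk unless \<open>f\<close> is continuous on \<open>K\<close> with \<open>f (0, 0) = 0\<close>; in the presence of a dominating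
  set inside \<open>K\<close>, the limit exists and does not depend on the approximating polynomials.\<close>

definition fcalc :: "(real \<times> real) set \<Rightarrow> (real \<times> real \<Rightarrow> real) \<Rightarrow> 'a::comm_cstar_algebra \<Rightarrow> 'a \<Rightarrow> 'a" where
  "fcalc K f p q = lim (\<lambda>n. evalA (vec2 p q) (approx_polys K f n))"

text \<open>Morally, \<open>poly_dominated D p q\<close> says that the joint spectrum of \<open>(p, q)\<close> lies in the
  closure of \<open>D \<union> {(0, 0)}\<close>.\<close>

definition poly_dominated :: "(real \<times> real) set \<Rightarrow> 'a::comm_cstar_algebra \<Rightarrow> 'a \<Rightarrow> bool" where
  "poly_dominated D p q \<longleftrightarrow>
     (\<forall>e B. vanishing_pexp 2 e \<longrightarrow> (\<forall>z\<in>D. \<bar>peval2 e z\<bar> \<le> B) \<longrightarrow> norm (evalA (vec2 p q) e) \<le> B)"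

locale pair_calculus =
  fixes K D :: "(real \<times> real) set" and p q :: "'a::comm_cstar_algebra"
  assumes compact_K: "compact K" and origin_K: "(0, 0) \<in> K" and D_K: "D \<subseteq> K"
    and dominated: "poly_dominated D p q"
begin

lemma norm_evalA_vec2_le:
  assumes "vanishing_pexp 2 e" "\<And>z. z \<in> D \<Longrightarrow> \<bar>peval2 e z\<bar> \<le> B"
  shows "norm (evalA (vec2 p q) e) \<le> B"
  using dominated assms unfolding poly_dominated_def by blast

lemma polys_approx_close:
  assumes "polys_approx K f Q" "polys_approx K f Q'" "0 < \<epsilon>"
  shows "\<exists>N. \<forall>m\<ge>N. \<forall>n\<ge>N. norm (evalA (vec2 p q) (Q m) - evalA (vec2 p q) (Q' n)) < \<epsilon>"
proof -
  have "uniform_limit D (\<lambda>n. peval2 (Q n)) f sequentially" "uniform_limit D (\<lambda>n. peval2 (Q' n)) f sequentially"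
    using assms(1,2) D_K uniform_limit_on_subset unfolding polys_approx_def by blast+
  then obtain N1 N2 where
    N1: "\<And>n z. n \<ge> N1 \<Longrightarrow> z \<in> D \<Longrightarrow> \<bar>peval2 (Q n) z - f z\<bar> < \<epsilon> / 3" and
    N2: "\<And>n z. n \<ge> N2 \<Longrightarrow> z \<in> D \<Longrightarrow> \<bar>peval2 (Q' n) z - f z\<bar> < \<epsilon> / 3"
    using \<open>0 < \<epsilon>\<close> unfolding uniform_limit_sequentially_iff dist_real_def
    by (metis zero_less_divide_iff zero_less_numeral)
  have "norm (evalA (vec2 p q) (Q m) - evalA (vec2 p q) (Q' n)) \<le> 2 * \<epsilon> / 3"
    if "m \<ge> max N1 N2" "n \<ge> max N1 N2" for m n
    unfolding evalA_Sub[symmetric]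
  proof (rule norm_evalA_vec2_le)
    show "vanishing_pexp 2 (Sub (Q m) (Q' n))"
      using assms(1,2) by (simp add: polys_approx_def vanishing_pexp_Sub)
    show "\<bar>peval2 (Sub (Q m) (Q' n)) z\<bar> \<le> 2 * \<epsilon> / 3" if "z \<in> D" for z
      using N1[of m z] N2[of n z] \<open>m \<ge> max N1 N2\<close> \<open>n \<ge> max N1 N2\<close> that
      unfolding peval2_simps by linarith
  qed
  then show ?thesis using \<open>0 < \<epsilon>\<close> by (intro exI[of _ "max N1 N2"]) force
qed

lemma polys_approx_LIMSEQ:
  assumes "polys_approx K f Q"
  shows "(\<lambda>n. evalA (vec2 p q) (Q n)) \<longlonglongrightarrow> fcalc K f p q"
proof -
  let ?Q' = "approx_polys K f"
  have Q': "polys_approx K f ?Q'"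
    unfolding approx_polys_def using assms by (rule someI[where P = "polys_approx K f"])
  have "Cauchy (\<lambda>n. evalA (vec2 p q) (?Q' n))"
    by (rule CauchyI) (use polys_approx_close[OF Q' Q'] in blast)
  then have "(\<lambda>n. evalA (vec2 p q) (?Q' n)) \<longlonglongrightarrow> fcalc K f p q"
    unfolding fcalc_def by (simp add: Cauchy_convergent_iff convergent_LIMSEQ_iff)
  moreover have "(\<lambda>n. evalA (vec2 p q) (Q n) - evalA (vec2 p q) (?Q' n)) \<longlonglongrightarrow> 0"
  proof (rule LIMSEQ_I)
    fix r :: real assume "0 < r"
    from polys_approx_close[OF assms Q' this] obtain N
      where "\<forall>m\<ge>N. \<forall>n\<ge>N. norm (evalA (vec2 p q) (Q m) - evalA (vec2 p q) (?Q' n)) < r" ..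
    then show "\<exists>N. \<forall>n\<ge>N. norm (evalA (vec2 p q) (Q n) - evalA (vec2 p q) (?Q' n) - 0) < r" by auto
  qed
  ultimately show ?thesis by (rule Lim_transform)
qed

lemma fcalc_LIMSEQ:
  assumes "continuous_on K f" "f (0, 0) = 0"
  shows "(\<lambda>n. evalA (vec2 p q) (approx_polys K f n)) \<longlonglongrightarrow> fcalc K f p q"
  by (rule polys_approx_LIMSEQ[OF polys_approx_approx_polys[OF compact_K origin_K assms]])

lemma norm_fcalc_le:
  assumes f: "continuous_on K f" "f (0, 0) = 0" and B: "\<And>z. z \<in> D \<Longrightarrow> \<bar>f z\<bar> \<le> B"
  shows "norm (fcalc K f p q) \<le> B"
proof (rule field_le_epsilon)
  fix \<epsilon> :: real assume "0 < \<epsilon>"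
  let ?Q = "approx_polys K f"
  have Q: "polys_approx K f ?Q" by (rule polys_approx_approx_polys[OF compact_K origin_K f])
  then have "uniform_limit D (\<lambda>n. peval2 (?Q n)) f sequentially"
    using D_K uniform_limit_on_subset unfolding polys_approx_def by blast
  then obtain N where N: "\<And>n z. n \<ge> N \<Longrightarrow> z \<in> D \<Longrightarrow> \<bar>peval2 (?Q n) z - f z\<bar> < \<epsilon>"
    using \<open>0 < \<epsilon>\<close> unfolding uniform_limit_sequentially_iff dist_real_def by metis
  have "norm (evalA (vec2 p q) (?Q n)) \<le> B + \<epsilon>" if "n \<ge> N" for n
  proof (rule norm_evalA_vec2_le)
    show "vanishing_pexp 2 (?Q n)" using Q by (simp add: polys_approx_def)
    show "\<bar>peval2 (?Q n) z\<bar> \<le> B + \<epsilon>" if "z \<in> D" for z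
      using N[OF \<open>n \<ge> N\<close> that] B[OF that] by linarith
  qed
  then show "norm (fcalc K f p q) \<le> B + \<epsilon>"
    by (intro LIMSEQ_le_const2[OF tendsto_norm[OF fcalc_LIMSEQ[OF f]]]) blast
qed

lemma fcalc_diff:
  assumes f: "continuous_on K f" "f (0, 0) = 0" and g: "continuous_on K g" "g (0, 0) = 0"
  shows "fcalc K (\<lambda>z. f z - g z) p q = fcalc K f p q - fcalc K g p q"
proof -
  let ?F = "approx_polys K f" and ?G = "approx_polys K g"
  have F: "polys_approx K f ?F" by (rule polys_approx_approx_polys[OF compact_K origin_K f])
  have G: "polys_approx K g ?G" by (rule polys_approx_approx_polys[OF compact_K origin_K g])
  have "peval2 (Sub (?F n) (?G n)) = (\<lambda>z. peval2 (?F n) z - peval2 (?G n) z)" for n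
    by (rule ext) simp
  then have "polys_approx K (\<lambda>z. f z - g z) (\<lambda>n. Sub (?F n) (?G n))"
    using F G unfolding polys_approx_def by (auto intro: vanishing_pexp_Sub uniform_limit_minus)
  from polys_approx_LIMSEQ[OF this]
  have "(\<lambda>n. evalA (vec2 p q) (?F n) - evalA (vec2 p q) (?G n)) \<longlonglongrightarrow> fcalc K (\<lambda>z. f z - g z) p q"
    by (simp add: evalA_Sub)
  moreover have "(\<lambda>n. evalA (vec2 p q) (?F n) - evalA (vec2 p q) (?G n)) \<longlonglongrightarrow> fcalc K f p q - fcalc K g p q"
    by (intro tendsto_diff polys_approx_LIMSEQ F G)
  ultimately show ?thesis by (rule LIMSEQ_unique)
qed

lemma fcalc_mult:
  assumes f: "continuous_on K f" "f (0, 0) = 0" and g: "continuous_on K g" "g (0, 0) = 0"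
  shows "fcalc K (\<lambda>z. f z * g z) p q = fcalc K f p q * fcalc K g p q"
proof -
  let ?F = "approx_polys K f" and ?G = "approx_polys K g"
  have F: "polys_approx K f ?F" by (rule polys_approx_approx_polys[OF compact_K origin_K f])
  have G: "polys_approx K g ?G" by (rule polys_approx_approx_polys[OF compact_K origin_K g])
  have bounded: "bounded (f ` K)" "bounded (g ` K)"
    using compact_K f(1) g(1) by (auto intro: compact_imp_bounded compact_continuous_image)
  have "peval2 (Mul (?F n) (?G n)) = (\<lambda>z. peval2 (?F n) z * peval2 (?G n) z)" for n
    by (rule ext) simp
  then have "polys_approx K (\<lambda>z. f z * g z) (\<lambda>n. Mul (?F n) (?G n))"
    using F G bounded unfolding polys_approx_def by (auto intro: vanishing_pexp_Mul uniform_lim_mult)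
  from polys_approx_LIMSEQ[OF this]
  have "(\<lambda>n. evalA (vec2 p q) (?F n) * evalA (vec2 p q) (?G n)) \<longlonglongrightarrow> fcalc K (\<lambda>z. f z * g z) p q"
    using F G by (simp add: evalA_Mul polys_approx_def vanishing_pexp_def)
  moreover have "(\<lambda>n. evalA (vec2 p q) (?F n) * evalA (vec2 p q) (?G n)) \<longlonglongrightarrow> fcalc K f p q * fcalc K g p q"
    by (intro tendsto_mult polys_approx_LIMSEQ F G)
  ultimately show ?thesis by (rule LIMSEQ_unique)
qed

lemma fcalc_fst: "fcalc K fst p q = p" and fcalc_snd: "fcalc K snd p q = q"
proof -
  have "peval2 (Var 0) = fst" "peval2 (Var 1) = snd" by (auto simp: fun_eq_iff peval2_def vec2_def)
  then have "polys_approx K fst (\<lambda>_. Var 0)" "polys_approx K snd (\<lambda>_. Var 1)"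
    by (auto simp: polys_approx_def vanishing_pexp_def intro: uniform_limit_const)
  from this[THEN polys_approx_LIMSEQ] have "(\<lambda>_. p) \<longlonglongrightarrow> fcalc K fst p q" "(\<lambda>_. q) \<longlonglongrightarrow> fcalc K snd p q"
    by simp_all
  then show "fcalc K fst p q = p" "fcalc K snd p q = q" by (auto intro: LIMSEQ_unique)
qed

lemma norm_fcalc_diff_le:
  assumes f: "continuous_on K f" "f (0, 0) = 0" and g: "continuous_on K g" "g (0, 0) = 0"
    and B: "\<And>z. z \<in> D \<Longrightarrow> \<bar>f z - g z\<bar> \<le> B"
  shows "norm (fcalc K f p q - fcalc K g p q) \<le> B"
  unfolding fcalc_diff[OF f g, symmetric]
  using f g B by (intro norm_fcalc_le continuous_on_diff) auto

lemma fcalc_cong: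
  assumes "continuous_on K f" "f (0, 0) = 0" "continuous_on K g" "g (0, 0) = 0"
    and "\<And>z. z \<in> D \<Longrightarrow> f z = g z"
  shows "fcalc K f p q = fcalc K g p q"
  using norm_fcalc_diff_le[OF assms(1-4), of 0] assms(5) by simp

lemma fcalc_selfadjoint:
  assumes "star p = p" "star q = q" "continuous_on K f" "f (0, 0) = 0"
  shows "star (fcalc K f p q) = fcalc K f p q"
proof (rule star_LIMSEQ_selfadjoint[OF fcalc_LIMSEQ[OF assms(3,4)]])
  have "star (vec2 p q j) = vec2 p q j" for j using assms(1,2) by (simp add: vec2_def)
  then show "star (evalA (vec2 p q) (approx_polys K f n)) = evalA (vec2 p q) (approx_polys K f n)" for n
    by (rule star_evalA)
qed

lemma fcalc_positive:
  assumes "star p = p" "star q = q"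
    and f: "continuous_on K f" "f (0, 0) = 0" "\<And>z. z \<in> K \<Longrightarrow> 0 \<le> f z"
  shows "positive (fcalc K f p q)"
proof -
  let ?g = "\<lambda>z. sqrt (f z)"
  have g: "continuous_on K ?g" "?g (0, 0) = 0" using f by (auto intro: continuous_intros)
  have "fcalc K f p q = fcalc K (\<lambda>z. ?g z * ?g z) p q"
    using f g D_K by (intro fcalc_cong continuous_intros) auto
  also have "\<dots> = fcalc K ?g p q * fcalc K ?g p q" by (rule fcalc_mult[OF g g])
  also have "\<dots> = star (fcalc K ?g p q) * fcalc K ?g p q"
    by (simp only: fcalc_selfadjoint[OF assms(1,2) g])
  finally show ?thesis unfolding positive_def by blast
qed

lemma fcalc_in_cstar_gen:
  assumes "continuous_on K f" "f (0, 0) = 0"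
  shows "fcalc K f p q \<in> cstar_gen {p, q}"
proof (rule closed_subalgebra_LIMSEQ[OF cstar_gen(1) _ fcalc_LIMSEQ[OF assms]])
  have "vec2 p q j \<in> cstar_gen {p, q}" for j using cstar_gen(2)[of "{p, q}"] by (auto simp: vec2_def)
  then show "evalA (vec2 p q) (approx_polys K f n) \<in> cstar_gen {p, q}" for n
    by (rule evalA_in_subalgebra[OF cstar_gen(1)])
qed

lemma fcalc_in_cstar_gen_fst:
  assumes f: "continuous_on K f" "f (0, 0) = 0"
    and fst: "\<And>z. z \<in> K \<Longrightarrow> (fst z, 0) \<in> K \<and> f z = f (fst z, 0)"
  shows "fcalc K f p q \<in> cstar_gen {p}"
proof -
  let ?Q = "approx_polys K f" and ?\<sigma> = "vec2 (Var 0) (Cst 0)"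
  have Q: "polys_approx K f ?Q" by (rule polys_approx_approx_polys[OF compact_K origin_K f])
  have \<sigma>0: "evalR (\<lambda>_. 0) (?\<sigma> j) = 0" for j by (simp add: vec2_def)
  have peval: "peval2 (subst ?\<sigma> e) z = peval2 e (fst z, 0)" for e z
  proof -
    have "(\<lambda>j. evalR (vec2 (fst z) (snd z)) (?\<sigma> j)) = vec2 (fst z) 0" by (auto simp: vec2_def)
    then show ?thesis by (simp add: peval2_def evalR_subst)
  qed
  have "polys_approx K f (\<lambda>n. subst ?\<sigma> (?Q n))"
    unfolding polys_approx_def
  proof (intro conjI allI uniform_limitI)
    show "vanishing_pexp 2 (subst ?\<sigma> (?Q n))" for n
      using Q \<sigma>0 by (auto simp: polys_approx_def vanishing_pexp_def evalR_subst vec2_def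
          intro!: vars_below_subst)
    fix \<epsilon> :: real assume "0 < \<epsilon>"
    with Q have "\<forall>\<^sub>F n in sequentially. \<forall>z\<in>K. dist (peval2 (?Q n) z) (f z) < \<epsilon>"
      unfolding polys_approx_def by (blast dest: uniform_limitD)
    then show "\<forall>\<^sub>F n in sequentially. \<forall>z\<in>K. dist (peval2 (subst ?\<sigma> (?Q n)) z) (f z) < \<epsilon>"
      by (rule eventually_mono) (metis fst peval)
  qed
  then have lim: "(\<lambda>n. evalA (vec2 p q) (subst ?\<sigma> (?Q n))) \<longlonglongrightarrow> fcalc K f p q"
    by (rule polys_approx_LIMSEQ)
  have "evalA (vec2 p q) (?\<sigma> j) \<in> cstar_gen {p}" for j
    using cstar_gen[of "{p}"] by (auto simp: vec2_def evalA_def scal_def cstar_subalgebra_def)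
  then have "evalA (vec2 p q) (subst ?\<sigma> (?Q n)) \<in> cstar_gen {p}" for n
    unfolding evalA_subst[OF \<sigma>0] by (rule evalA_in_subalgebra[OF cstar_gen(1)])
  then show ?thesis by (rule closed_subalgebra_LIMSEQ[OF cstar_gen(1) _ lim])
qed

end

lemma selfadjoint_decomp:
  fixes b :: "'a::comm_cstar_algebra"
  defines "y1 \<equiv> (1/2) *\<^sub>R (b + star b)" and "y2 \<equiv> scaleC (- \<i> / 2) (b - star b)"
  shows "star y1 = y1" "star y2 = y2" "y1 * y1 + y2 * y2 = star b * b"
    "norm y1 \<le> norm b" "norm y2 \<le> norm b"
proof -
  show "star y1 = y1" unfolding y1_def by (simp add: star_scaleR star_add star_star add.commute)
  show "star y2 = y2" unfolding y2_def
    by (simp add: star_scaleC star_diff star_star scaleC_diff_right scaleC_minus_left)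
  have "y2 * y2 = scaleC ((- \<i> / 2) * (- \<i> / 2)) ((b - star b) * (b - star b))"
    by (simp add: y2_def scaleC_mult_left scaleC_mult_right scaleC_scaleC)
  also have "(- \<i> / 2) * (- \<i> / 2) = complex_of_real (- 1/4)"
    by (simp add: field_simps)
  finally have "y2 * y2 = (- 1/4) *\<^sub>R ((b - star b) * (b - star b))"
    unfolding scaleC_of_real .
  moreover have "y1 * y1 = (1/4) *\<^sub>R ((b + star b) * (b + star b))" by (simp add: y1_def)
  moreover have "(b + star b) * (b + star b) - (b - star b) * (b - star b) = 4 *\<^sub>R (star b * b)"
  proof -
    have "(b + star b) * (b + star b) - (b - star b) * (b - star b) = 2 *\<^sub>R (b * star b + star b * b)"
      by (simp add: algebra_simps scaleR_2)
    also have "b * star b + star b * b = 2 *\<^sub>R (star b * b)" by (simp add: mult.commute scaleR_2)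
    finally show ?thesis by simp
  qed
  ultimately show "y1 * y1 + y2 * y2 = star b * b"
    by (simp flip: scaleR_diff_right)
  have "norm (b + star b) \<le> 2 * norm b" "norm (b - star b) \<le> 2 * norm b"
    using norm_triangle_ineq[of b "star b"] norm_triangle_ineq4[of b "star b"] by simp_all
  then show "norm y1 \<le> norm b" "norm y2 \<le> norm b"
    by (simp_all add: y1_def y2_def norm_scaleC norm_divide)
qed

lemma star_positive: "positive x \<Longrightarrow> star x = x"
  by (auto simp: positive_def star_mult star_star)

lemma positive_sum_of_squares:
  assumes "positive h" "norm h \<le> 1"
  obtains y1 y2 where "star y1 = y1" "star y2 = y2" "norm y1 \<le> 1" "norm y2 \<le> 1" "h = y1 * y1 + y2 * y2"
proof -
  obtain b where b: "h = star b * b" using assms(1) unfolding positive_def by blast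
  have "(norm b)\<^sup>2 \<le> 1" using cstar_identity[of b] assms(2) b by simp
  then have "norm b \<le> 1" by (simp add: power_le_one_iff)
  show ?thesis
    by (rule that[of "(1/2) *\<^sub>R (b + star b)" "scaleC (- \<i> / 2) (b - star b)"])
      (use selfadjoint_decomp[of b] b \<open>norm b \<le> 1\<close> in auto)
qed

definition list_vec :: "'a::zero list \<Rightarrow> nat \<Rightarrow> 'a" where
  "list_vec ws j = (if j < length ws then ws ! j else 0)"

lemma poly_dominated_evalA:
  fixes ws :: "'a::comm_cstar_algebra list"
  assumes ws: "\<And>w. w \<in> set ws \<Longrightarrow> star w = w \<and> norm w < 1"
    and S: "vanishing_pexp (length ws) S" and T: "vanishing_pexp (length ws) T"
    and D: "\<And>\<theta>. (\<And>j. \<bar>\<theta> j\<bar> \<le> 1) \<Longrightarrow> (evalR \<theta> S, evalR \<theta> T) \<in> D"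
  shows "poly_dominated D (evalA (list_vec ws) S) (evalA (list_vec ws) T)"
  unfolding poly_dominated_def
proof (intro allI impI)
  fix e B assume e: "vanishing_pexp 2 e" and B: "\<forall>z\<in>D. \<bar>peval2 e z\<bar> \<le> B"
  have "vec2 (evalA (list_vec ws) S) (evalA (list_vec ws) T) = (\<lambda>j. evalA (list_vec ws) (vec2 S T j))"
    by (auto simp: vec2_def)
  moreover have "norm (evalA (\<lambda>j. evalA (list_vec ws) (vec2 S T j)) e) \<le> B"
  proof (rule norm_evalA_subst_le[where m = "length ws" and k = 2])
    show "star (list_vec ws j) = list_vec ws j" for j using ws by (auto simp: list_vec_def)
    show "norm (list_vec ws j) < 1" if "j < length ws" for j using ws that by (simp add: list_vec_def)
    show "vanishing_pexp (length ws) (vec2 S T j)" for j using S T by (simp add: vec2_def)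
    show "evalR (\<lambda>_. 0) (vec2 S T j) = 0" for j using S T by (simp add: vec2_def vanishing_pexp_def)
    show "vanishing_pexp 2 e" by (rule e)
    fix \<theta> :: "nat \<Rightarrow> real" assume "\<And>j. \<bar>\<theta> j\<bar> \<le> 1"
    then have "(evalR \<theta> S, evalR \<theta> T) \<in> D" by (rule D)
    moreover have "(\<lambda>j. evalR \<theta> (vec2 S T j)) = vec2 (evalR \<theta> S) (evalR \<theta> T)" by (auto simp: vec2_def)
    ultimately show "\<bar>evalR (\<lambda>j. evalR \<theta> (vec2 S T j)) e\<bar> \<le> B" using B by (auto simp: peval2_def)
  qed
  ultimately show "norm (evalA (vec2 (evalA (list_vec ws) S) (evalA (list_vec ws) T)) e) \<le> B" by simp
qed

text \<open>The factor 4 compensates for halving the self-adjoint parts to make them strict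
  contractions; hence the range \<open>[0, 8]\<close>.\<close>

definition sq_sum :: "nat \<Rightarrow> pexp" where
  "sq_sum i = Mul (Cst 4) (Add (Mul (Var i) (Var i)) (Mul (Var (Suc i)) (Var (Suc i))))"

lemma vanishing_pexp_sq_sum: "Suc i < m \<Longrightarrow> vanishing_pexp m (sq_sum i)"
  by (simp add: sq_sum_def vanishing_pexp_def)

lemma evalR_sq_sum:
  assumes "\<And>j. \<bar>\<theta> j\<bar> \<le> 1"
  shows "0 \<le> evalR \<theta> (sq_sum i) \<and> evalR \<theta> (sq_sum i) \<le> 8"
proof -
  have "\<theta> j * \<theta> j \<le> 1" for j
    using mult_mono[OF assms[of j] assms[of j]] by (simp add: abs_mult_self_eq)
  from this[of i] this[of "Suc i"] show ?thesis by (simp add: sq_sum_def)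
qed

lemma evalA_sq_sum:
  assumes "w i = (1/2) *\<^sub>R y1" "w (Suc i) = (1/2) *\<^sub>R y2"
  shows "evalA w (sq_sum i) = y1 * y1 + y2 * y2"
proof -
  have "scaleC 4 x = 4 *\<^sub>R x" for x :: 'a using scaleC_of_real[of 4 x] by simp
  with assms show ?thesis
    by (simp add: sq_sum_def evalA_def scal_emb emb_mult scaleR_add_right flip: emb_add)
qed

definition calc_box :: "(real \<times> real) set" where
  "calc_box = cbox (0, -1) (8, 9)"

definition strip :: "real \<Rightarrow> (real \<times> real) set" where
  "strip \<kappa> = {(s, s + \<xi>) |s \<xi>. s \<in> {0..8} \<and> \<bar>\<xi>\<bar> \<le> \<kappa>}"

lemma poly_dominated_positive_pair:
  fixes h a :: "'a::comm_cstar_algebra"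
  assumes "positive h" "positive a" "norm h \<le> 1" "norm a \<le> 1"
  shows "poly_dominated ({0..8} \<times> {0..8}) h a"
proof -
  obtain y1 y2 where y: "star y1 = y1" "star y2 = y2" "norm y1 \<le> 1" "norm y2 \<le> 1" "h = y1 * y1 + y2 * y2"
    using positive_sum_of_squares[OF assms(1,3)] .
  obtain z1 z2 where z: "star z1 = z1" "star z2 = z2" "norm z1 \<le> 1" "norm z2 \<le> 1" "a = z1 * z1 + z2 * z2"
    using positive_sum_of_squares[OF assms(2,4)] .
  define ws where "ws = map (scaleR (1/2)) [y1, y2, z1, z2]"
  have "evalA (list_vec ws) (sq_sum 0) = h" "evalA (list_vec ws) (sq_sum 2) = a"
    by (simp_all add: evalA_sq_sum ws_def list_vec_def y(5) z(5))
  moreover have "poly_dominated ({0..8} \<times> {0..8}) (evalA (list_vec ws) (sq_sum 0)) (evalA (list_vec ws) (sq_sum 2))"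
    by (rule poly_dominated_evalA)
      (use y z in \<open>auto simp: ws_def star_scaleR vanishing_pexp_sq_sum evalR_sq_sum\<close>)
  ultimately show ?thesis by simp
qed

lemma poly_dominated_close_pair:
  fixes h x :: "'a::comm_cstar_algebra"
  assumes "positive h" "norm h \<le> 1" "star x = x" "norm x < \<kappa>"
  shows "poly_dominated (strip \<kappa>) h (h + x)"
proof -
  obtain y1 y2 where y: "star y1 = y1" "star y2 = y2" "norm y1 \<le> 1" "norm y2 \<le> 1" "h = y1 * y1 + y2 * y2"
    using positive_sum_of_squares[OF assms(1,2)] .
  have "0 < \<kappa>" using assms(4) norm_ge_zero[of x] by linarith
  define ws where "ws = [(1/2) *\<^sub>R y1, (1/2) *\<^sub>R y2, (1/\<kappa>) *\<^sub>R x]"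
  define T where "T = Add (sq_sum 0) (Mul (Cst \<kappa>) (Var 2))"
  have "evalA (list_vec ws) (Mul (Cst \<kappa>) (Var 2)) = x"
    using \<open>0 < \<kappa>\<close> by (simp add: evalA_def ws_def list_vec_def scaleC_of_real)
  then have "evalA (list_vec ws) (sq_sum 0) = h" "evalA (list_vec ws) T = h + x"
    by (simp_all add: T_def evalA_Add evalA_sq_sum ws_def list_vec_def y(5))
  moreover have "poly_dominated (strip \<kappa>)
      (evalA (list_vec ws) (sq_sum 0)) (evalA (list_vec ws) T)"
  proof (rule poly_dominated_evalA)
    show "star w = w \<and> norm w < 1" if "w \<in> set ws" for w
      using that y assms(3,4) \<open>0 < \<kappa>\<close> by (auto simp: ws_def star_scaleR)
    show "vanishing_pexp (length ws) (sq_sum 0)" "vanishing_pexp (length ws) T"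
      by (simp_all add: ws_def T_def vanishing_pexp_sq_sum) (simp add: vanishing_pexp_def sq_sum_def)
    fix \<theta> :: "nat \<Rightarrow> real" assume \<theta>: "\<And>j. \<bar>\<theta> j\<bar> \<le> 1"
    have "\<bar>\<kappa> * \<theta> 2\<bar> \<le> \<kappa>" using \<theta>[of 2] \<open>0 < \<kappa>\<close> by (simp add: abs_mult mult_left_le)
    then show "(evalR \<theta> (sq_sum 0), evalR \<theta> T) \<in> strip \<kappa>"
      using evalR_sq_sum[OF \<theta>, where i = 0] by (auto simp: T_def strip_def)
  qed
  ultimately show ?thesis by simp
qed

definition cutoff :: "real \<Rightarrow> real \<Rightarrow> real" where
  "cutoff r s = max 0 (s - r)"

definition ratio_cutoff :: "real \<Rightarrow> real \<Rightarrow> real \<times> real \<Rightarrow> real" where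
  "ratio_cutoff r c z = min 1 (cutoff r (fst z) / max (snd z) c)"

lemma continuous_on_cutoff_fst: "continuous_on S (\<lambda>z. cutoff r (fst z))"
  unfolding cutoff_def by (intro continuous_intros)

lemma continuous_on_ratio_cutoff: "0 < c \<Longrightarrow> continuous_on S (ratio_cutoff r c)"
  unfolding ratio_cutoff_def cutoff_def by (intro continuous_intros) auto

lemma ratio_cutoff_mult:
  assumes "0 < c" "0 \<le> \<kappa>" "0 \<le> s" "\<bar>\<xi>\<bar> \<le> \<kappa>"
  shows "ratio_cutoff (c + \<kappa>) c (s, s + \<xi>) * (s + \<xi>) = cutoff (c + \<kappa>) s"
proof (cases "s \<le> c + \<kappa>")
  case False
  then have "c \<le> s + \<xi>" "(s - (c + \<kappa>)) / (s + \<xi>) \<le> 1" using assms by (auto simp: abs_le_iff)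
  then show ?thesis using False assms(1) by (simp add: ratio_cutoff_def cutoff_def max_def)
qed (simp add: ratio_cutoff_def cutoff_def)

lemma pair_calculus_positive_pair:
  assumes "positive h" "positive a" "norm h \<le> 1" "norm a \<le> 1"
  shows "pair_calculus calc_box ({0..8} \<times> {0..8}) h a"
  using assms by unfold_locales (auto simp: calc_box_def intro: poly_dominated_positive_pair)

lemma pair_calculus_close_pair:
  assumes "positive h" "positive a" "norm h \<le> 1" "norm (a - h) < \<kappa>" "\<kappa> \<le> 1"
  shows "pair_calculus calc_box (strip \<kappa>) h a"
proof
  show "strip \<kappa> \<subseteq> calc_box" using assms(5) by (auto simp: strip_def calc_box_def cbox_Pair_eq abs_le_iff)
  have "star (a - h) = a - h" using assms(1,2) by (simp add: star_positive star_diff)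
  then show "poly_dominated (strip \<kappa>) h a"
    using poly_dominated_close_pair[of h "a - h" \<kappa>] assms(1,3,4) by simp
qed (auto simp: calc_box_def)

lemma cutoff_calculus:
  assumes "positive h" "positive a" "norm h \<le> 1" "norm a \<le> 1" "0 \<le> r"
  defines "h' \<equiv> fcalc calc_box (\<lambda>z. cutoff r (fst z)) h a"
  shows "h' \<in> cstar_gen {h}" "positive h'" "norm (h - h') \<le> r"
proof -
  interpret pair_calculus calc_box "{0..8} \<times> {0..8}" h a
    by (rule pair_calculus_positive_pair[OF assms(1-4)])
  have f: "continuous_on calc_box (\<lambda>z. cutoff r (fst z))" "cutoff r (fst (0, 0)) = 0"
    by (rule continuous_on_cutoff_fst) (use assms(5) in \<open>simp add: cutoff_def\<close>)
  show "h' \<in> cstar_gen {h}"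
    unfolding h'_def by (rule fcalc_in_cstar_gen_fst[OF f]) (auto simp: calc_box_def cbox_Pair_eq)
  show "positive h'"
    unfolding h'_def by (rule fcalc_positive[OF star_positive star_positive f]) (use assms in \<open>auto simp: cutoff_def\<close>)
  have "norm (fcalc calc_box fst h a - h') \<le> r"
    unfolding h'_def by (rule norm_fcalc_diff_le[OF _ _ f]) (use assms(5) in \<open>auto simp: cutoff_def intro: continuous_intros\<close>)
  then show "norm (h - h') \<le> r" by (simp only: fcalc_fst)
qed

lemma ratio_cutoff_calculus:
  assumes "positive h" "positive a" "norm h \<le> 1" "norm a \<le> 1" "0 \<le> r" "0 < c"
  defines "g \<equiv> fcalc calc_box (ratio_cutoff r c) h a"
  shows "g \<in> cstar_gen {h, a}" "positive g" "norm g \<le> 1"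
proof -
  interpret pair_calculus calc_box "{0..8} \<times> {0..8}" h a
    by (rule pair_calculus_positive_pair[OF assms(1-4)])
  have g: "continuous_on calc_box (ratio_cutoff r c)" "ratio_cutoff r c (0, 0) = 0"
    by (rule continuous_on_ratio_cutoff[OF assms(6)]) (use assms(5) in \<open>simp add: ratio_cutoff_def cutoff_def\<close>)
  show "g \<in> cstar_gen {h, a}" unfolding g_def by (rule fcalc_in_cstar_gen[OF g])
  show "positive g"
    unfolding g_def by (rule fcalc_positive[OF star_positive star_positive g])
      (use assms in \<open>auto simp: ratio_cutoff_def cutoff_def\<close>)
  show "norm g \<le> 1"
    unfolding g_def by (rule norm_fcalc_le[OF g]) (use assms(6) in \<open>auto simp: ratio_cutoff_def cutoff_def\<close>)
qed

lemma ratio_cutoff_calculus_mult: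
  assumes "positive h" "positive a" "norm h \<le> 1" "norm (a - h) < \<kappa>" "\<kappa> \<le> 1" "0 < c"
  shows "fcalc calc_box (ratio_cutoff (c + \<kappa>) c) h a * a = fcalc calc_box (\<lambda>z. cutoff (c + \<kappa>) (fst z)) h a"
proof -
  interpret pair_calculus calc_box "strip \<kappa>" h a by (rule pair_calculus_close_pair[OF assms(1-5)])
  have "0 \<le> \<kappa>" using assms(4) norm_ge_zero[of "a - h"] by linarith
  have g: "continuous_on calc_box (ratio_cutoff (c + \<kappa>) c)" "ratio_cutoff (c + \<kappa>) c (0, 0) = 0"
    by (rule continuous_on_ratio_cutoff[OF assms(6)]) (use \<open>0 \<le> \<kappa>\<close> assms(6) in \<open>simp add: ratio_cutoff_def cutoff_def\<close>)
  have f: "continuous_on calc_box (\<lambda>z. cutoff (c + \<kappa>) (fst z))" "cutoff (c + \<kappa>) (fst (0, 0)) = 0"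
    by (rule continuous_on_cutoff_fst) (use \<open>0 \<le> \<kappa>\<close> assms(6) in \<open>simp add: cutoff_def\<close>)
  have snd: "continuous_on calc_box snd" "snd (0 :: real, 0 :: real) = 0" by (auto intro: continuous_intros)
  have "fcalc calc_box (ratio_cutoff (c + \<kappa>) c) h a * a = fcalc calc_box (\<lambda>z. ratio_cutoff (c + \<kappa>) c z * snd z) h a"
    by (simp only: fcalc_mult[OF g snd] fcalc_snd)
  also have "\<dots> = fcalc calc_box (\<lambda>z. cutoff (c + \<kappa>) (fst z)) h a"
    by (rule fcalc_cong[OF continuous_on_mult[OF g(1) snd(1)] _ f])
      (use \<open>0 \<le> \<kappa>\<close> assms(6) in \<open>auto simp: strip_def ratio_cutoff_mult g(2)\<close>)
  finally show ?thesis .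
qed

theorem proposition4p4:
  fixes a h :: "'a::comm_cstar_algebra" and \<delta> :: real
  assumes "positive a" and "positive h"
    and "norm a = 1" and "norm h = 1"
    and "0 < \<delta>" and "\<delta> \<le> 1"
    and "norm (a - h) < \<delta>"
  shows "\<exists>h' g. h' \<in> cstar_gen {h} \<and> positive h' \<and>
                g \<in> cstar_gen {h, a} \<and> positive g \<and>
                norm (h - h') < \<delta> \<and> norm g \<le> 1 \<and> g * a = h'"
proof -
  obtain \<kappa> where \<kappa>: "norm (a - h) < \<kappa>" "\<kappa> < \<delta>" using assms(7) dense by blast
  define c where "c = (\<delta> - \<kappa>) / 2"
  have "0 \<le> \<kappa>" using \<kappa>(1) norm_ge_zero[of "a - h"] by linarith
  then have c: "0 < c" "0 \<le> c + \<kappa>" "c + \<kappa> < \<delta>" using \<kappa>(2) by (auto simp: c_def field_simps)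
  let ?h' = "fcalc calc_box (\<lambda>z. cutoff (c + \<kappa>) (fst z)) h a"
  let ?g = "fcalc calc_box (ratio_cutoff (c + \<kappa>) c) h a"
  have "?h' \<in> cstar_gen {h}" "positive ?h'" "norm (h - ?h') < \<delta>"
    using cutoff_calculus[of h a "c + \<kappa>"] assms(1-4) c by auto
  moreover have "?g \<in> cstar_gen {h, a}" "positive ?g" "norm ?g \<le> 1"
    using ratio_cutoff_calculus[of h a "c + \<kappa>" c] assms(1-4) c by auto
  moreover have "?g * a = ?h'"
    using ratio_cutoff_calculus_mult[of h a \<kappa> c] assms(1,2,4,6) \<kappa> c(1) by simp
  ultimately show ?thesis by blast
qed

end
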